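(* Let $q\ge2$ and let $U$ be a $q\times q$ row-stochastic matrix with strictly positive entries. There is a constant $C_4'$, independent of $n$, $M$, $a$ and the input distribution, such that for all sufficiently large $n$, every integer $M\ge2$, every integer $a\in[1:n]$, every distribution $Q_{\mathrm{ip}}$ on $\mathcal{N}_{q,n}$, every choice of representatives $\tilde{\mathbf{t}}_{\mathbf{l}}\in C_{\mathbf{l}}$ ($\mathbf{l}\in V$) and every Gray-like ordering $g$ of $V$, the output $\hat Q_{\mathrm{ip}}$ of the quantization procedure described in the context is an $M$-type distribution on $\mathcal{N}_{q,n}$ (a probability distribution all of whose values are integer multiples of $1/M$), and the corresponding output distributions $Q_{\mathrm{op}}(\mathbf{w})=\sum_{\mathbf{t}}Q_{\mathrm{ip}}(\mathbf{t})P_{q\text{-NC}}(\mathbf{w}|\mathbf{t})$ and $\hat Q_{\mathrm{op}}(\mathbf{w})=\sum_{\mathbf{t}}\hat Q_{\mathrm{ip}}(\mathbf{t})P_{q\text{-NC}}(\mathbf{w}|\mathbf{t})$ satisfy $$d_{\mathrm{TV}}(Q_{\mathrm{op}},\hat Q_{\mathrm{op}})\le \frac{C_4' a(\log n)^{(q-2)/2}}{\sqrt n}+\left(\frac{2n}{a}\right)^{q-1}\frac{C_4'(\log n)^{(q-2)/2}}{\sqrt n}\cdot\frac{a}{M}.$$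
   Context: Notation: $\mathcal{N}_{q,n}=\{\mathbf{t}\in\mathbb{Z}_{\ge0}^q:\sum_i t_i=n\}$ is the set of compositions of vectors in $[1:q]^n$ (the composition of $\mathbf{x}$ is $(N(1|\mathbf{x}),\dots,N(q|\mathbf{x}))$, $N(c|\mathbf{x})=|\{i:x_i=c\}|$). The $q$-ary noisy composition channel $q$-NCC$_{n,U}$ has input and output alphabet $\mathcal{N}_{q,n}$ and transition probability $P_{q\text{-NC}}(\mathbf{w}|\mathbf{t})=\sum_{\mathbf{z}\in[1:q]^n:\,\text{composition of }\mathbf{z}=\mathbf{w}}\prod_{i=1}^nU(z_i|x_i)$, where $\mathbf{x}$ is any vector of composition $\mathbf{t}$. $d_{\mathrm{TV}}(P,Q)=\frac12\sum|P-Q|$. Logarithms base 2. $\lfloor x\rfloor_{1/M}=\lfloor Mx\rfloor/M$. Cells: let $\nu=\lceil (n+1)/a\rceil$; for $\mathbf{l}\in[1:\nu]^{q-1}$ let $C_{\mathbf{l}}=\{\mathbf{t}\in\mathcal{N}_{q,n}:(l_i-1)a\le t_i\le l_ia-1\ \forall i\in[1:q-1]\}$, and let $V=\{\mathbf{l}:C_{\mathbf{l}}\ne\emptyset\}$. Two distinct $\mathbf{l},\mathbf{l}'\in V$ are adjacent if either they differ in exactly one coordinate, by exactly $1$, or they differ in exactly two coordinates $k,j$ with $l_k=l'_k+1$ and $l_j=l'_j-1$. A Gray-like ordering of $V$ is a bijection $g:[1:|V|]\to V$ with $g(j),g(j+1)$ adjacent for all $j\in[1:|V|-1]$. Quantization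 procedure. Stage I: for each $\mathbf{l}\in V$ and $\mathbf{t}\in C_{\mathbf{l}}\setminus\{\tilde{\mathbf{t}}_{\mathbf{l}}\}$ set $Q^{(a)}(\mathbf{t})=\lfloor Q_{\mathrm{ip}}(\mathbf{t})\rfloor_{1/M}$, and set $Q^{(a)}(\tilde{\mathbf{t}}_{\mathbf{l}})=\lfloor Q_{\mathrm{ip}}(\tilde{\mathbf{t}}_{\mathbf{l}})\rfloor_{1/M}+\sum_{\mathbf{t}\in C_{\mathbf{l}}}\big(Q_{\mathrm{ip}}(\mathbf{t})-\lfloor Q_{\mathrm{ip}}(\mathbf{t})\rfloor_{1/M}\big)$. Stage II: set $R_1=Q^{(a)}(\tilde{\mathbf{t}}_{g(1)})$; for $i=1,\dots,|V|-1$ set $\hat Q_{\mathrm{ip}}(\tilde{\mathbf{t}}_{g(i)})=\lfloor R_i\rfloor_{1/M}$ and $R_{i+1}=Q^{(a)}(\tilde{\mathbf{t}}_{g(i+1)})+R_i-\lfloor R_i\rfloor_{1/M}$; set $\hat Q_{\mathrm{ip}}(\tilde{\mathbf{t}}_{g(|V|)})=R_{|V|}$; and set $\hat Q_{\mathrm{ip}}(\mathbf{t})=Q^{(a)}(\mathbf{t})$ for every $\mathbf{t}$ that is not a representative. *)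

theory Defs
  imports Complex_Main "HOL-Library.FuncSet"
begin

definition vecs :: "nat \<Rightarrow> nat \<Rightarrow> (nat \<Rightarrow> nat) set" where
  "vecs q n = PiE {1..n} (\<lambda>_. {1..q})"

definition comp :: "nat \<Rightarrow> nat \<Rightarrow> (nat \<Rightarrow> nat) \<Rightarrow> (nat \<Rightarrow> nat)" where
  "comp q n x = (\<lambda>c. if c \<in> {1..q} then card {i \<in> {1..n}. x i = c} else 0)"

definition comps :: "nat \<Rightarrow> nat \<Rightarrow> (nat \<Rightarrow> nat) set" where
  "comps q n = {t. (\<forall>c. c \<notin> {1..q} \<longrightarrow> t c = 0) \<and> (\<Sum>c\<in>{1..q}. t c) = n}"

text \<open>Transition probability of q-NCC_{n,U}; U y x denotes U(y|x).
  x is any vector of composition t (the value does not depend on the choice).\<close>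
definition ncc :: "nat \<Rightarrow> nat \<Rightarrow> (nat \<Rightarrow> nat \<Rightarrow> real) \<Rightarrow> (nat \<Rightarrow> nat) \<Rightarrow> (nat \<Rightarrow> nat) \<Rightarrow> real" where
  "ncc q n U w t =
     (let x = (SOME x. x \<in> vecs q n \<and> comp q n x = t)
      in \<Sum>z\<in>{z \<in> vecs q n. comp q n z = w}. \<Prod>i\<in>{1..n}. U (z i) (x i))"

definition flr :: "nat \<Rightarrow> real \<Rightarrow> real" where
  "flr M x = real_of_int \<lfloor>real M * x\<rfloor> / real M"

definition nu :: "nat \<Rightarrow> nat \<Rightarrow> nat" where
  "nu n a = nat \<lceil>real (n + 1) / real a\<rceil>"

definition cell :: "nat \<Rightarrow> nat \<Rightarrow> nat \<Rightarrow> (nat \<Rightarrow> nat) \<Rightarrow> (nat \<Rightarrow> nat) set" where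
  "cell q n a l = {t \<in> comps q n. \<forall>i\<in>{1..q-1}.
      (int (l i) - 1) * int a \<le> int (t i) \<and> int (t i) \<le> int (l i) * int a - 1}"

definition cellidx :: "nat \<Rightarrow> nat \<Rightarrow> nat \<Rightarrow> (nat \<Rightarrow> nat) set" where
  "cellidx q n a = PiE {1..q-1} (\<lambda>_. {1..nu n a})"

definition Vset :: "nat \<Rightarrow> nat \<Rightarrow> nat \<Rightarrow> (nat \<Rightarrow> nat) set" where
  "Vset q n a = {l \<in> cellidx q n a. cell q n a l \<noteq> {}}"

definition adjacent :: "nat \<Rightarrow> (nat \<Rightarrow> nat) \<Rightarrow> (nat \<Rightarrow> nat) \<Rightarrow> bool" where
  "adjacent q l l' \<longleftrightarrow> l \<noteq> l' \<and>
     ((\<exists>k\<in>{1..q-1}. (l k = l' k + 1 \<or> l' k = l k + 1) \<and>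
          (\<forall>j\<in>{1..q-1}. j \<noteq> k \<longrightarrow> l j = l' j)) \<or>
      (\<exists>k\<in>{1..q-1}. \<exists>j\<in>{1..q-1}. k \<noteq> j \<and> l k = l' k + 1 \<and> l j + 1 = l' j \<and>
          (\<forall>i\<in>{1..q-1}. i \<noteq> k \<and> i \<noteq> j \<longrightarrow> l i = l' i)))"

definition gray_like :: "nat \<Rightarrow> nat \<Rightarrow> nat \<Rightarrow> (nat \<Rightarrow> (nat \<Rightarrow> nat)) \<Rightarrow> bool" where
  "gray_like q n a g \<longleftrightarrow>
     bij_betw g {1..card (Vset q n a)} (Vset q n a) \<and>
     (\<forall>j\<in>{1..<card (Vset q n a)}. adjacent q (g j) (g (Suc j)))"

text \<open>Stage I. Since cells are disjoint, the representatives are distinct, so the inner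
  sum over l with rep l = t has at most one term.\<close>
definition stageI :: "nat \<Rightarrow> nat \<Rightarrow> nat \<Rightarrow> nat \<Rightarrow> ((nat \<Rightarrow> nat) \<Rightarrow> real)
     \<Rightarrow> ((nat \<Rightarrow> nat) \<Rightarrow> (nat \<Rightarrow> nat)) \<Rightarrow> (nat \<Rightarrow> nat) \<Rightarrow> real" where
  "stageI q n a M Qip rep t = flr M (Qip t) +
     (\<Sum>l\<in>{l \<in> Vset q n a. rep l = t}. \<Sum>t'\<in>cell q n a l. (Qip t' - flr M (Qip t')))"

text \<open>Stage II: Racc Qa M rep g k = R_{k+1}.\<close>
primrec Racc :: "((nat \<Rightarrow> nat) \<Rightarrow> real) \<Rightarrow> nat \<Rightarrow> ((nat \<Rightarrow> nat) \<Rightarrow> (nat \<Rightarrow> nat))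
     \<Rightarrow> (nat \<Rightarrow> (nat \<Rightarrow> nat)) \<Rightarrow> nat \<Rightarrow> real" where
  "Racc Qa M rep g 0 = Qa (rep (g 1))"
| "Racc Qa M rep g (Suc k) =
     Qa (rep (g (k + 2))) + Racc Qa M rep g k - flr M (Racc Qa M rep g k)"

definition Rval :: "((nat \<Rightarrow> nat) \<Rightarrow> real) \<Rightarrow> nat \<Rightarrow> ((nat \<Rightarrow> nat) \<Rightarrow> (nat \<Rightarrow> nat))
     \<Rightarrow> (nat \<Rightarrow> (nat \<Rightarrow> nat)) \<Rightarrow> nat \<Rightarrow> real" where
  "Rval Qa M rep g i = Racc Qa M rep g (i - 1)"

definition quant :: "nat \<Rightarrow> nat \<Rightarrow> nat \<Rightarrow> nat \<Rightarrow> ((nat \<Rightarrow> nat) \<Rightarrow> real)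
     \<Rightarrow> ((nat \<Rightarrow> nat) \<Rightarrow> (nat \<Rightarrow> nat)) \<Rightarrow> (nat \<Rightarrow> (nat \<Rightarrow> nat)) \<Rightarrow> (nat \<Rightarrow> nat) \<Rightarrow> real" where
  "quant q n a M Qip rep g t =
     (let Qa = stageI q n a M Qip rep; N = card (Vset q n a) in
      if \<exists>i\<in>{1..N}. rep (g i) = t then
        (let i = (THE i. i \<in> {1..N} \<and> rep (g i) = t) in
         if i < N then flr M (Rval Qa M rep g i) else Rval Qa M rep g i)
      else Qa t)"

definition is_dist :: "nat \<Rightarrow> nat \<Rightarrow> ((nat \<Rightarrow> nat) \<Rightarrow> real) \<Rightarrow> bool" where
  "is_dist q n P \<longleftrightarrow> (\<forall>t\<in>comps q n. P t \<ge> 0) \<and> (\<Sum>t\<in>comps q n. P t) = 1"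

definition M_type :: "nat \<Rightarrow> nat \<Rightarrow> nat \<Rightarrow> ((nat \<Rightarrow> nat) \<Rightarrow> real) \<Rightarrow> bool" where
  "M_type q n M P \<longleftrightarrow> is_dist q n P \<and>
     (\<forall>t\<in>comps q n. \<exists>k::int. P t = real_of_int k / real M)"

definition out_dist :: "nat \<Rightarrow> nat \<Rightarrow> (nat \<Rightarrow> nat \<Rightarrow> real) \<Rightarrow> ((nat \<Rightarrow> nat) \<Rightarrow> real)
     \<Rightarrow> (nat \<Rightarrow> nat) \<Rightarrow> real" where
  "out_dist q n U P w = (\<Sum>t\<in>comps q n. P t * ncc q n U w t)"

definition dTV :: "nat \<Rightarrow> nat \<Rightarrow> ((nat \<Rightarrow> nat) \<Rightarrow> real) \<Rightarrow> ((nat \<Rightarrow> nat) \<Rightarrow> real) \<Rightarrow> real" where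
  "dTV q n P Q = (1/2) * (\<Sum>w\<in>comps q n. \<bar>P w - Q w\<bar>)"

end

theory Submission
  imports Defs "HOL-Library.Function_Algebras"
begin

text \<open>Both stages of the quantizer only move mass between nearby compositions: Stage I moves the
  rounding residues (total mass at most 1) inside a cell of side \<open>a\<close>, and Stage II moves a
  carry of less than \<open>1/M\<close> between the representatives of consecutive, hence adjacent, cells.
  So the theorem reduces to a Lipschitz bound for the channel: relabelling one input symbol
  changes the output law by \<open>O(1/sqrt n)\<close> in \<open>L\<^sup>1\<close>.

  For the Lipschitz bound, let \<open>\<delta>\<close> be the smallest entry of \<open>U\<close>. Every channel use outputs, with
  probability \<open>\<delta>\<close>, a fair coin between two fixed symbols \<open>c\<close> and \<open>d\<close>. Hence the output composition
  contains a \<open>Binomial(K, 1/2)\<close> split between \<open>c\<close> and \<open>d\<close> with \<open>K \<sim> Binomial(n - 1, \<delta>)\<close>,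
  and shifting such a split by one unit costs \<open>2 binom(K, K/2) / 2\<^sup>K \<le> 2 / sqrt (K + 1)\<close> in \<open>L\<^sup>1\<close>.
  Averaging over \<open>K\<close> gives \<open>2 / sqrt (\<delta> n)\<close>.\<close>

declare plus_fun_apply[simp del]

section \<open>Output compositions of independent channel uses\<close>

definition unit_vec :: "nat \<Rightarrow> nat \<Rightarrow> nat" where
  "unit_vec y = (\<lambda>c. if c = y then 1 else 0)"

definition count_on :: "nat set \<Rightarrow> (nat \<Rightarrow> nat) \<Rightarrow> nat \<Rightarrow> nat" where
  "count_on J z = (\<lambda>c. card {i\<in>J. z i = c})"

text \<open>\<open>chan_expect U q J x \<Phi> u\<close> is the expectation of \<open>\<Phi> (u + composition of Z)\<close>, where the
  \<open>Z i\<close> (\<open>i \<in> J\<close>) are independent outputs of the channel \<open>U\<close> on inputs \<open>x i\<close>.\<close>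
definition chan_expect :: "(nat \<Rightarrow> nat \<Rightarrow> real) \<Rightarrow> nat \<Rightarrow> nat set \<Rightarrow> (nat \<Rightarrow> nat)
    \<Rightarrow> ((nat \<Rightarrow> nat) \<Rightarrow> real) \<Rightarrow> (nat \<Rightarrow> nat) \<Rightarrow> real" where
  "chan_expect U q J x \<Phi> u =
     (\<Sum>z\<in>PiE J (\<lambda>_. {1..q}). (\<Prod>i\<in>J. U (z i) (x i)) * \<Phi> (u + count_on J z))"

definition symbol_op :: "nat \<Rightarrow> (nat \<Rightarrow> real) \<Rightarrow> ((nat \<Rightarrow> nat) \<Rightarrow> real) \<Rightarrow> (nat \<Rightarrow> nat) \<Rightarrow> real" where
  "symbol_op q W \<Phi> w = (\<Sum>y\<in>{1..q}. W y * \<Phi> (w + unit_vec y))"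

lemma card_filter_insert:
  assumes "finite J" "i \<notin> J"
  shows "card {j\<in>insert i J. x j = c} = card {j\<in>J. x j = c} + (if x i = c then 1 else 0)"
proof -
  have "{j\<in>insert i J. x j = c} = (if x i = c then insert i {j\<in>J. x j = c} else {j\<in>J. x j = c})"
    by auto
  then show ?thesis using assms by auto
qed

lemma count_on_update:
  assumes "finite J" "i \<notin> J"
  shows "count_on (insert i J) (z(i := y)) = unit_vec y + count_on J z"
proof
  fix c
  have "{j\<in>J. (z(i := y)) j = c} = {j\<in>J. z j = c}"
    using assms(2) by auto
  then show "count_on (insert i J) (z(i := y)) c = (unit_vec y + count_on J z) c"
    using card_filter_insert[OF assms, of "z(i := y)" c]
    by (simp add: count_on_def unit_vec_def plus_fun_apply)
qed

lemma chan_expect_empty: "chan_expect U q {} x \<Phi> u = \<Phi> u"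
proof -
  have "count_on {} z = 0" for z by (simp add: count_on_def fun_eq_iff)
  then show ?thesis by (simp add: chan_expect_def)
qed

lemma chan_expect_insert:
  assumes "finite J" "i \<notin> J"
  shows "chan_expect U q (insert i J) x \<Phi> u =
    chan_expect U q J x (symbol_op q (\<lambda>y. U y (x i)) \<Phi>) u"
proof -
  let ?S = "\<lambda>_::nat. {1..q::nat}"
  let ?h = "\<lambda>(y, z). z(i := y)"
  let ?P = "\<lambda>z. \<Prod>j\<in>J. U (z j) (x j)"
  have inj: "inj_on ?h ({1..q} \<times> PiE J ?S)"
    using inj_combinator[of i J ?S] assms by simp
  have summand: "(\<Prod>j\<in>insert i J. U ((z(i := y)) j) (x j)) * \<Phi> (u + count_on (insert i J) (z(i := y)))
      = U y (x i) * (?P z * \<Phi> (u + count_on J z + unit_vec y))" for y z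
  proof -
    have "(\<Prod>j\<in>J. U ((z(i := y)) j) (x j)) = ?P z"
      using assms(2) by (intro prod.cong) auto
    then show ?thesis
      using assms by (simp add: count_on_update ac_simps)
  qed
  have "chan_expect U q (insert i J) x \<Phi> u =
      (\<Sum>(y, z)\<in>{1..q} \<times> PiE J ?S. U y (x i) * (?P z * \<Phi> (u + count_on J z + unit_vec y)))"
    unfolding chan_expect_def PiE_insert_eq sum.reindex[OF inj]
    by (intro sum.cong refl) (simp only: o_def case_prod_unfold summand)
  also have "\<dots> = (\<Sum>z\<in>PiE J ?S. \<Sum>y\<in>{1..q}. U y (x i) * (?P z * \<Phi> (u + count_on J z + unit_vec y)))"
    by (simp add: sum.cartesian_product[symmetric]) (rule sum.swap)
  also have "\<dots> = chan_expect U q J x (symbol_op q (\<lambda>y. U y (x i)) \<Phi>) u"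
    unfolding chan_expect_def symbol_op_def by (simp add: sum_distrib_left ac_simps)
  finally show ?thesis .
qed

lemma chan_expect_linear:
  "chan_expect U q J x (\<lambda>w. a * \<Phi> w + b * \<Psi> w) u = a * chan_expect U q J x \<Phi> u + b * chan_expect U q J x \<Psi> u"
  unfolding chan_expect_def by (simp add: sum.distrib sum_distrib_left algebra_simps)

lemma chan_expect_sum:
  "chan_expect U q J x (\<lambda>w. \<Sum>y\<in>Y. F y w) u = (\<Sum>y\<in>Y. chan_expect U q J x (F y) u)"
  unfolding chan_expect_def by (simp add: sum_distrib_left sum.swap[of _ Y])

lemma chan_expect_cmult:
  "chan_expect U q J x (\<lambda>w. a * \<Phi> w) u = a * chan_expect U q J x \<Phi> u"
  unfolding chan_expect_def by (simp add: sum_distrib_left algebra_simps)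

lemma chan_expect_shift:
  "chan_expect U q J x (\<lambda>w. \<Phi> (w + v)) u = chan_expect U q J x \<Phi> (u + v)"
  unfolding chan_expect_def by (simp add: ac_simps)

lemma chan_expect_cong:
  assumes "\<And>i. i \<in> J \<Longrightarrow> x i = x' i"
  shows "chan_expect U q J x \<Phi> u = chan_expect U q J x' \<Phi> u"
  unfolding chan_expect_def using assms by (intro sum.cong refl arg_cong2[where f="(*)"] prod.cong) auto

lemma chan_expect_insert_first:
  assumes "finite J" "i \<notin> J"
  shows "chan_expect U q (insert i J) x \<Phi> u =
    (\<Sum>y\<in>{1..q}. U y (x i) * chan_expect U q J x \<Phi> (u + unit_vec y))"
  unfolding chan_expect_insert[OF assms] symbol_op_def
  by (simp add: chan_expect_sum chan_expect_cmult chan_expect_shift)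

lemma chan_expect_perm:
  assumes "finite J" "finite J'" "count_on J x = count_on J' x'"
  shows "chan_expect U q J x \<Phi> u = chan_expect U q J' x' \<Phi> u"
  using assms
proof (induction J arbitrary: J' \<Phi> rule: finite_induct)
  case empty
  have "J' = {}"
  proof (rule ccontr)
    assume "J' \<noteq> {}"
    then obtain i where "i \<in> J'" by auto
    then have "count_on J' x' (x' i) > 0"
      using empty.prems(1) by (auto simp: count_on_def card_gt_0_iff)
    then show False using fun_cong[OF empty.prems(2), of "x' i"] by (simp add: count_on_def)
  qed
  then show ?case by (simp add: chan_expect_empty)
next
  case (insert i J)
  have "count_on J' x' (x i) > 0"
    using insert.prems(2)[symmetric] insert.hyps(1) by (auto simp: count_on_def card_gt_0_iff)
  then obtain i' where i': "i' \<in> J'" "x' i' = x i"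
    by (auto simp: count_on_def card_gt_0_iff)
  define J1 where "J1 = J' - {i'}"
  have J': "J' = insert i' J1" "i' \<notin> J1" "finite J1"
    using i' insert.prems(1) by (auto simp: J1_def)
  have "count_on J x = count_on J1 x'"
  proof
    fix c
    show "count_on J x c = count_on J1 x' c"
      using fun_cong[OF insert.prems(2), of c] i'(2)
        card_filter_insert[OF insert.hyps(1,2), of x c] card_filter_insert[OF J'(3,2), of x' c]
      unfolding J'(1) count_on_def by simp
  qed
  then have "chan_expect U q J x (symbol_op q (\<lambda>y. U y (x i)) \<Phi>) u =
      chan_expect U q J1 x' (symbol_op q (\<lambda>y. U y (x' i')) \<Phi>) u"
    using insert.IH J'(3) i'(2) by simp
  then show ?case
    unfolding J'(1) chan_expect_insert[OF insert.hyps(1,2)] chan_expect_insert[OF J'(3,2)] .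
qed

lemma finite_vecs: "finite (vecs q n)"
  by (simp add: vecs_def finite_PiE)

lemma comp_eq_count_on:
  assumes "z \<in> vecs q n"
  shows "comp q n z = count_on {1..n} z"
proof
  fix c
  show "comp q n z c = count_on {1..n} z c"
  proof (cases "c \<in> {1..q}")
    case False
    then have "{i\<in>{1..n}. z i = c} = {}" using assms by (auto simp: vecs_def PiE_iff)
    then show ?thesis using False by (simp add: comp_def count_on_def)
  qed (simp add: comp_def count_on_def)
qed

lemma comp_in_comps:
  assumes "z \<in> vecs q n"
  shows "comp q n z \<in> comps q n"
proof -
  have "(\<Sum>c\<in>{1..q}. card {i\<in>{1..n}. z i = c}) = card {1..n::nat}"
    using assms by (subst card_eq_sum, subst sum.group[symmetric]) (auto simp: vecs_def PiE_iff)
  then show ?thesis by (simp add: comps_def comp_def)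
qed

lemma comps_outside: "t \<in> comps q n \<Longrightarrow> c \<notin> {1..q} \<Longrightarrow> t c = 0"
  by (simp add: comps_def)

lemma comps_sum: "t \<in> comps q n \<Longrightarrow> (\<Sum>c\<in>{1..q}. t c) = n"
  by (simp add: comps_def)

lemma comps_le: "t \<in> comps q n \<Longrightarrow> c \<in> {1..q} \<Longrightarrow> t c \<le> n"
  using member_le_sum[of c "{1..q}" t] by (simp add: comps_def)

lemma finite_comps: "finite (comps q n)"
proof -
  let ?F = "\<lambda>f c. if c \<in> {1..q} then f c else 0 :: nat"
  have "comps q n \<subseteq> ?F ` PiE {1..q} (\<lambda>_. {0..n})"
  proof
    fix t assume t: "t \<in> comps q n"
    then have "restrict t {1..q} \<in> PiE {1..q} (\<lambda>_. {0..n})" by (auto dest: comps_le)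
    moreover have "t = ?F (restrict t {1..q})" using t by (auto simp: comps_def fun_eq_iff)
    ultimately show "t \<in> ?F ` PiE {1..q} (\<lambda>_. {0..n})" by blast
  qed
  then show ?thesis by (rule finite_subset) (simp add: finite_PiE)
qed

lemma comps_has_vec:
  "t \<in> comps q n \<Longrightarrow> \<exists>x\<in>vecs q n. comp q n x = t"
proof (induction n arbitrary: t)
  case 0
  then have "t = (\<lambda>_. 0)"
    by (auto simp: comps_def fun_eq_iff)
  then have "comp q 0 (\<lambda>_. undefined) = t" by (simp add: comp_def fun_eq_iff)
  moreover have "(\<lambda>_. undefined) \<in> vecs q 0" by (simp add: vecs_def)
  ultimately show ?case by blast
next
  case (Suc n)
  obtain c0 where c0: "c0 \<in> {1..q}" "t c0 > 0"
    using comps_sum[OF Suc.prems] by (metis Suc_neq_Zero gr0I sum.neutral)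
  define t0 where "t0 = t(c0 := t c0 - 1)"
  have "(\<Sum>c\<in>{1..q}. t0 c) = n"
    using comps_sum[OF Suc.prems] c0 by (simp add: t0_def sum.remove)
  then have "t0 \<in> comps q n"
    using comps_outside[OF Suc.prems] c0 by (auto simp: comps_def t0_def)
  then obtain x0 where x0: "x0 \<in> vecs q n" "comp q n x0 = t0" using Suc.IH by blast
  define x where "x = x0(Suc n := c0)"
  have "x \<in> vecs q (Suc n)"
    using x0(1) c0 by (auto simp: vecs_def x_def PiE_iff extensional_def)
  moreover have "comp q (Suc n) x = t"
  proof
    fix c
    have "{i\<in>{1..n}. x i = c} = {i\<in>{1..n}. x0 i = c}" by (auto simp: x_def)
    then have "card {i\<in>{1..Suc n}. x i = c} = card {i\<in>{1..n}. x0 i = c} + (if c0 = c then 1 else 0)"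
      using card_filter_insert[of "{1..n}" "Suc n" x c] by (simp add: atLeastAtMostSuc_conv x_def)
    then show "comp q (Suc n) x c = t c"
      using fun_cong[OF x0(2), of c] comps_outside[OF Suc.prems] c0
      by (auto simp: comp_def t0_def)
  qed
  ultimately show ?case by blast
qed

lemma sum_ncc_eq_chan_expect:
  assumes "x \<in> vecs q n" "comp q n x = t"
  shows "(\<Sum>w\<in>comps q n. \<sigma> w * ncc q n U w t) = chan_expect U q {1..n} x \<sigma> 0"
proof -
  define x0 where "x0 = (SOME x. x \<in> vecs q n \<and> comp q n x = t)"
  have x0: "x0 \<in> vecs q n" "comp q n x0 = t"
    using someI[of "\<lambda>x. x \<in> vecs q n \<and> comp q n x = t" x] assms unfolding x0_def by auto
  define \<mu> where "\<mu> z = (\<Prod>i\<in>{1..n}. U (z i) (x0 i))" for z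
  have "(\<Sum>w\<in>comps q n. \<sigma> w * ncc q n U w t) =
      (\<Sum>w\<in>comps q n. \<Sum>z\<in>{z\<in>vecs q n. comp q n z = w}. \<mu> z * \<sigma> (comp q n z))"
    unfolding ncc_def Let_def x0_def[symmetric] \<mu>_def[symmetric] sum_distrib_left
    by (intro sum.cong refl) (simp add: mult.commute)
  also have "\<dots> = (\<Sum>z\<in>vecs q n. \<mu> z * \<sigma> (comp q n z))"
    by (rule sum.group) (use finite_comps finite_vecs comp_in_comps in auto)
  also have "\<dots> = chan_expect U q {1..n} x0 \<sigma> 0"
    unfolding chan_expect_def \<mu>_def using comp_eq_count_on by (intro sum.cong) (auto simp: vecs_def)
  also have "\<dots> = chan_expect U q {1..n} x \<sigma> 0"
    using comp_eq_count_on x0 assms by (intro chan_expect_perm) auto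
  finally show ?thesis .
qed

lemma vecs_update: "x \<in> vecs q n \<Longrightarrow> p \<in> {1..n} \<Longrightarrow> y \<in> {1..q} \<Longrightarrow> x(p := y) \<in> vecs q n"
  by (auto simp: vecs_def PiE_iff extensional_def)

lemma comp_update:
  assumes "x \<in> vecs q n" "p \<in> {1..n}" "y \<in> {1..q}"
  shows "comp q n (x(p := y)) + unit_vec (x p) = comp q n x + unit_vec y"
proof -
  define J where "J = {1..n} - {p}"
  have J: "finite J" "p \<notin> J" "{1..n} = insert p J" using assms(2) by (auto simp: J_def)
  have "comp q n (x(p := y)) = unit_vec y + count_on J x"
    using comp_eq_count_on[OF vecs_update[OF assms]] count_on_update[OF J(1,2), of x y]
    unfolding J(3) by simp
  moreover have "comp q n x = unit_vec (x p) + count_on J x"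
    using comp_eq_count_on[OF assms(1)] count_on_update[OF J(1,2), of x "x p"]
    unfolding J(3) by simp
  ultimately show ?thesis by (simp add: ac_simps)
qed

section \<open>Binomial averages\<close>

definition binom_expect :: "real \<Rightarrow> nat \<Rightarrow> (nat \<Rightarrow> real) \<Rightarrow> real" where
  "binom_expect p m f = (\<Sum>k\<le>m. real (m choose k) * p ^ k * (1 - p) ^ (m - k) * f k)"

lemma binom_expect_cong: "(\<And>k. k \<le> m \<Longrightarrow> f k = g k) \<Longrightarrow> binom_expect p m f = binom_expect p m g"
  unfolding binom_expect_def by (intro sum.cong) auto

lemma binom_expect_0 [simp]: "binom_expect p 0 f = f 0"
  by (simp add: binom_expect_def)

lemma binom_expect_Suc:
  "binom_expect p (Suc m) f = p * binom_expect p m (\<lambda>k. f (Suc k)) + (1 - p) * binom_expect p m f"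
proof -
  let ?T = "\<lambda>j k. real (m choose j) * p ^ Suc k * (1 - p) ^ (m - k) * f (Suc k)"
  have "binom_expect p (Suc m) f = (1 - p) ^ Suc m * f 0 + (\<Sum>k\<le>m. ?T (Suc k) k) + (\<Sum>k\<le>m. ?T k k)"
    unfolding binom_expect_def by (subst sum.atMost_Suc_shift) (simp add: sum.distrib algebra_simps)
  also have "(\<Sum>k\<le>m. ?T k k) = p * binom_expect p m (\<lambda>k. f (Suc k))"
    unfolding binom_expect_def by (simp add: sum_distrib_left algebra_simps)
  also have "(1 - p) ^ Suc m * f 0 + (\<Sum>k\<le>m. ?T (Suc k) k) = (1 - p) * binom_expect p m f"
  proof -
    have "(\<Sum>k\<le>m. ?T (Suc k) k) = (\<Sum>k<m. ?T (Suc k) k)"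
      by (simp add: lessThan_Suc_atMost[symmetric])
    also have "\<dots> = (1 - p) * (\<Sum>k<m. real (m choose Suc k) * p ^ Suc k * (1 - p) ^ (m - Suc k) * f (Suc k))"
      unfolding sum_distrib_left
    proof (intro sum.cong refl)
      fix k assume "k \<in> {..<m}"
      then have "(1 - p) ^ (m - k) = (1 - p) * (1 - p) ^ (m - Suc k)"
        by (simp add: Suc_diff_Suc flip: power_Suc)
      then show "?T (Suc k) k =
          (1 - p) * (real (m choose Suc k) * p ^ Suc k * (1 - p) ^ (m - Suc k) * f (Suc k))"
        by (simp only: mult_ac)
    qed
    finally show ?thesis
      unfolding binom_expect_def by (subst (2) sum.atMost_shift) (simp add: algebra_simps)
  qed
  finally show ?thesis by (simp add: algebra_simps)
qed

lemma binom_expect_const: "binom_expect p m (\<lambda>_. c) = c"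
  by (induction m) (simp_all add: binom_expect_Suc algebra_simps)

lemma binom_expect_mono:
  assumes "0 \<le> p" "p \<le> 1" "\<And>k. k \<le> m \<Longrightarrow> f k \<le> g k"
  shows "binom_expect p m f \<le> binom_expect p m g"
  unfolding binom_expect_def using assms by (intro sum_mono mult_left_mono) auto

lemma binom_expect_linear:
  "binom_expect p m (\<lambda>k. a * f k + b * g k) = a * binom_expect p m f + b * binom_expect p m g"
  unfolding binom_expect_def by (simp add: sum.distrib sum_distrib_left algebra_simps)

lemma binom_expect_cmult: "binom_expect p m (\<lambda>k. a * f k) = a * binom_expect p m f"
  unfolding binom_expect_def by (simp add: sum_distrib_left ac_simps)

lemma binom_expect_half: "binom_expect (1/2) L g = (\<Sum>s\<le>L. real (L choose s) * g s) / 2 ^ L"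
proof -
  have "(1/2::real) ^ s * (1 - 1/2) ^ (L - s) = 1 / 2 ^ L" if "s \<le> L" for s
    using that by (simp add: power_add[symmetric] power_one_over)
  then show ?thesis unfolding binom_expect_def
    by (simp add: sum_divide_distrib) (intro sum.cong refl, simp add: field_simps)
qed

lemma binom_expect_inverse:
  assumes "0 < p" "p \<le> 1"
  shows "binom_expect p m (\<lambda>k. 1 / (real k + 1)) \<le> 1 / ((real m + 1) * p)"
proof -
  have absorb: "real (m choose k) / (real k + 1) = real (Suc m choose Suc k) / (real m + 1)" for k
    using Suc_times_binomial_eq[of m k] by (simp add: field_split_simps flip: of_nat_mult)
  have "binom_expect p m (\<lambda>k. 1 / (real k + 1)) =
      (\<Sum>k\<le>m. real (Suc m choose Suc k) * p ^ Suc k * (1 - p) ^ (Suc m - Suc k)) / ((real m + 1) * p)"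
    unfolding binom_expect_def sum_divide_distrib
  proof (intro sum.cong refl)
    fix k
    have "real (m choose k) * p ^ k * (1 - p) ^ (m - k) * (1 / (real k + 1)) =
        real (m choose k) / (real k + 1) * p ^ Suc k * (1 - p) ^ (m - k) / p"
      using assms by simp
    then show "real (m choose k) * p ^ k * (1 - p) ^ (m - k) * (1 / (real k + 1)) =
        real (Suc m choose Suc k) * p ^ Suc k * (1 - p) ^ (Suc m - Suc k) / ((real m + 1) * p)"
      by (simp add: absorb)
  qed
  also have "(\<Sum>k\<le>m. real (Suc m choose Suc k) * p ^ Suc k * (1 - p) ^ (Suc m - Suc k)) = 1 - (1 - p) ^ Suc m"
  proof -
    have "(p + (1 - p)) ^ Suc m = (\<Sum>k\<le>Suc m. real (Suc m choose k) * p ^ k * (1 - p) ^ (Suc m - k))"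
      by (rule binomial_ring)
    also have "\<dots> = (1 - p) ^ Suc m +
        (\<Sum>k\<le>m. real (Suc m choose Suc k) * p ^ Suc k * (1 - p) ^ (Suc m - Suc k))"
      by (subst sum.atMost_Suc_shift) simp
    finally show ?thesis by simp
  qed
  also have "(1 - (1 - p) ^ Suc m) / ((real m + 1) * p) \<le> 1 / ((real m + 1) * p)"
    using assms by (intro divide_right_mono) auto
  finally show ?thesis .
qed

lemma binom_expect_inverse_sqrt:
  assumes "0 < p" "p \<le> 1"
  shows "binom_expect p m (\<lambda>k. 1 / sqrt (real k + 1)) \<le> 1 / sqrt ((real m + 1) * p)"
proof -
  define X where "X = (real m + 1) * p"
  have X: "X > 0" using assms by (simp add: X_def)
  define \<alpha> where "\<alpha> = 1 / sqrt X"
  have \<alpha>: "\<alpha> > 0" using X by (simp add: \<alpha>_def)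
  \<comment> \<open>AM-GM, \<open>s \<le> (\<alpha>\<^sup>2 + s\<^sup>2) / (2 \<alpha>)\<close>, turns the concave \<open>1/sqrt\<close> into the linear \<open>1/(k+1)\<close>\<close>
  have amgm: "1 / sqrt (real k + 1) \<le> \<alpha> / 2 * 1 + 1 / (2 * \<alpha>) * (1 / (real k + 1))" for k
  proof -
    define s where "s = 1 / sqrt (real k + 1)"
    have "0 \<le> (s - \<alpha>)\<^sup>2" by simp
    then have "s \<le> (s\<^sup>2 + \<alpha>\<^sup>2) / (2 * \<alpha>)"
      using \<alpha> by (simp add: field_simps power2_eq_square)
    also have "\<dots> = \<alpha> / 2 * 1 + 1 / (2 * \<alpha>) * (1 / (real k + 1))"
      using \<alpha> by (simp add: s_def power_divide add_divide_distrib power2_eq_square)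
    finally show ?thesis by (simp add: s_def)
  qed
  have "binom_expect p m (\<lambda>k. 1 / sqrt (real k + 1))
      \<le> binom_expect p m (\<lambda>k. \<alpha> / 2 * 1 + 1 / (2 * \<alpha>) * (1 / (real k + 1)))"
    using assms amgm by (intro binom_expect_mono) auto
  also have "\<dots> = \<alpha> / 2 + 1 / (2 * \<alpha>) * binom_expect p m (\<lambda>k. 1 / (real k + 1))"
    using binom_expect_linear[of p m "\<alpha> / 2" "\<lambda>_. 1" "1 / (2 * \<alpha>)" "\<lambda>k. 1 / (real k + 1)"]
    by (simp only: binom_expect_const mult_1_right)
  also have "\<dots> \<le> \<alpha> / 2 + 1 / (2 * \<alpha>) * (1 / X)"
    using binom_expect_inverse[OF assms, of m] \<alpha> unfolding X_def
    by (intro add_left_mono mult_left_mono) auto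
  also have "\<dots> = \<alpha>"
    using X by (simp add: \<alpha>_def field_split_simps)
  finally show ?thesis by (simp add: \<alpha>_def X_def)
qed

lemma sum_abs_binomial_shift_diff:
  "(\<Sum>r\<le>Suc L. \<bar>(if r = 0 then 0 else real (L choose (r - 1))) - real (L choose r)\<bar>) =
    2 * real (L choose (L div 2))"
proof -
  define a where "a r = (if r = 0 then 0 else real (L choose (r - 1)))" for r
  define b where "b r = real (L choose r)" for r
  let ?h = "L div 2"
  have telescope: "(\<Sum>r\<le>k. b r - a r) = real (L choose k)" for k
    by (induction k) (simp_all add: a_def b_def)
  have rising: "a r \<le> b r" if "r \<le> ?h" for r
    using that binomial_mono[of "r - 1" r L] by (cases "r = 0") (auto simp: a_def b_def)
  have falling: "b r \<le> a r" if "?h < r" "r \<le> Suc L" for r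
  proof (cases "r = Suc L")
    case False
    then show ?thesis using that binomial_antimono[of "r - 1" r L] by (simp add: a_def b_def)
  qed (simp add: a_def b_def binomial_eq_0)
  have sub: "{..?h} \<subseteq> {..Suc L}" by auto
  have "(\<Sum>r\<le>Suc L. \<bar>a r - b r\<bar>) = (\<Sum>r\<in>{..Suc L} - {..?h}. \<bar>a r - b r\<bar>) + (\<Sum>r\<le>?h. \<bar>a r - b r\<bar>)"
    by (rule sum.subset_diff[OF sub]) simp
  also have "\<dots> = - (\<Sum>r\<in>{..Suc L} - {..?h}. b r - a r) + (\<Sum>r\<le>?h. b r - a r)"
    using rising falling by (simp add: sum_negf[symmetric])
  also have "\<dots> = 2 * (\<Sum>r\<le>?h. b r - a r) - (\<Sum>r\<le>Suc L. b r - a r)"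
    using sum.subset_diff[OF sub, of "\<lambda>r. b r - a r"] by simp
  finally show ?thesis using telescope[of "Suc L"] telescope[of ?h] by (simp add: a_def b_def)
qed

lemma central_binomial_double: "(2 * k + 2) choose (k + 1) = 2 * ((2 * k + 1) choose k)"
  using binomial_symmetric[of k "2 * k + 1"] by (simp add: mult_2)

lemma central_binomial_Suc:
  "real (Suc k) * real ((2 * Suc k) choose Suc k) = 2 * (2 * real k + 1) * real ((2 * k) choose k)"
proof -
  have "Suc k * ((2 * k + 1) choose k) = (2 * k + 1) * ((2 * k) choose k)"
    using binomial_absorb_comp[of "2 * k + 1" k] by (simp add: algebra_simps)
  then have "Suc k * ((2 * Suc k) choose Suc k) = 2 * (2 * k + 1) * ((2 * k) choose k)"
    using central_binomial_double[of k] by (simp add: algebra_simps)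
  then have "real (Suc k * ((2 * Suc k) choose Suc k)) = real (2 * (2 * k + 1) * ((2 * k) choose k))"
    by (rule arg_cong)
  then show ?thesis by (simp only: of_nat_mult of_nat_add of_nat_numeral of_nat_1)
qed

lemma central_binomial_sq_le: "(real ((2 * k) choose k) / 4 ^ k)\<^sup>2 * (2 * real k + 1) \<le> 1"
proof (induction k)
  case (Suc k)
  define x where "x = real ((2 * k) choose k) / 4 ^ k"
  define A where "A = real ((2 * Suc k) choose Suc k)"
  have "(real k + 1) * A = 2 * (2 * real k + 1) * (x * 4 ^ k)"
    unfolding A_def x_def using central_binomial_Suc[of k] by (simp del: binomial_Suc_Suc add: add.commute)
  then have "A = x * 4 ^ Suc k * (2 * real k + 1) / (2 * real k + 2)"
    by (simp add: field_simps)
  then have "A / 4 ^ Suc k = x * (2 * real k + 1) / (2 * real k + 2)"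
    by simp
  then have "(A / 4 ^ Suc k)\<^sup>2 * (2 * real (Suc k) + 1) =
      (x\<^sup>2 * (2 * real k + 1)) * ((2 * real k + 1) * (2 * real k + 3) / (2 * real k + 2)\<^sup>2)"
    by (simp add: power2_eq_square)
  also have "\<dots> \<le> 1 * 1"
  proof (rule mult_mono)
    show "(2 * real k + 1) * (2 * real k + 3) / (2 * real k + 2)\<^sup>2 \<le> 1"
      by (subst pos_divide_le_eq, simp, simp add: power2_eq_square algebra_simps)
  qed (use Suc.IH in \<open>simp_all add: x_def\<close>)
  finally show ?case by (simp add: A_def)
qed simp

lemma middle_binomial_le: "real (L choose (L div 2)) / 2 ^ L \<le> 1 / sqrt (real L + 1)"
proof -
  let ?y = "real (L choose (L div 2)) / 2 ^ L"
  obtain k where "L = 2 * k \<or> L = 2 * k + 1"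
    by (metis dvd_mult_div_cancel oddE)
  then have "?y\<^sup>2 * (real L + 1) \<le> 1"
  proof
    assume L: "L = 2 * k"
    then show ?thesis using central_binomial_sq_le[of k] by (simp add: power_mult)
  next
    assume L: "L = 2 * k + 1"
    then have "?y = real ((2 * (k + 1)) choose (k + 1)) / 4 ^ (k + 1)"
      using central_binomial_double[of k] by (simp add: power_mult)
    moreover have "(real L + 1) \<le> 2 * real (k + 1) + 1" using L by simp
    ultimately show ?thesis
      using central_binomial_sq_le[of "k + 1"] by (smt (verit) mult_left_mono zero_le_power2)
  qed
  then have "?y \<le> sqrt (1 / (real L + 1))"
    by (intro real_le_rsqrt) (simp add: field_simps)
  then show ?thesis by (simp add: real_sqrt_divide)
qed

section \<open>Smoothing by a fair coin between two symbols\<close>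

definition scaled_unit :: "nat \<Rightarrow> nat \<Rightarrow> nat \<Rightarrow> nat" where
  "scaled_unit s y = (\<lambda>c. if c = y then s else 0)"

definition avg_op :: "nat \<Rightarrow> nat \<Rightarrow> ((nat \<Rightarrow> nat) \<Rightarrow> real) \<Rightarrow> (nat \<Rightarrow> nat) \<Rightarrow> real" where
  "avg_op c d \<Phi> w = (\<Phi> (w + unit_vec c) + \<Phi> (w + unit_vec d)) / 2"

lemma scaled_unit_0 [simp]: "scaled_unit 0 y = 0"
  by (simp add: fun_eq_iff scaled_unit_def)

lemma scaled_unit_Suc: "scaled_unit (Suc s) y = unit_vec y + scaled_unit s y"
  by (simp add: fun_eq_iff scaled_unit_def unit_vec_def plus_fun_apply)

lemma avg_op_iter:
  "(avg_op c d ^^ L) \<Phi> u = binom_expect (1/2) L (\<lambda>s. \<Phi> (u + scaled_unit s c + scaled_unit (L - s) d))"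
proof (induction L arbitrary: u)
  case (Suc L)
  have "binom_expect (1/2) L (\<lambda>s. \<Phi> (u + unit_vec c + scaled_unit s c + scaled_unit (L - s) d)) =
      binom_expect (1/2) L (\<lambda>s. \<Phi> (u + scaled_unit (Suc s) c + scaled_unit (Suc L - Suc s) d))"
    by (intro binom_expect_cong) (simp add: scaled_unit_Suc add_ac)
  moreover have "binom_expect (1/2) L (\<lambda>s. \<Phi> (u + unit_vec d + scaled_unit s c + scaled_unit (L - s) d)) =
      binom_expect (1/2) L (\<lambda>s. \<Phi> (u + scaled_unit s c + scaled_unit (Suc L - s) d))"
    by (intro binom_expect_cong) (simp add: scaled_unit_Suc add_ac Suc_diff_le)
  ultimately show ?case
    using Suc.IH[of "u + unit_vec c"] Suc.IH[of "u + unit_vec d"] by (simp add: avg_op_def binom_expect_Suc)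
qed simp

lemma avg_op_iter_shift_diff:
  assumes "\<And>w. \<bar>\<Phi> w\<bar> \<le> B"
  shows "\<bar>(avg_op c d ^^ L) \<Phi> (u + unit_vec c) - (avg_op c d ^^ L) \<Phi> (u + unit_vec d)\<bar>
    \<le> B * (2 / sqrt (real L + 1))"
proof -
  define \<psi> where "\<psi> r = \<Phi> (u + scaled_unit r c + scaled_unit (Suc L - r) d)" for r
  define a where "a r = (if r = 0 then 0 else real (L choose (r - 1)))" for r
  define b where "b r = real (L choose r)" for r
  have B: "B \<ge> 0" using assms[of u] by simp
  have "(\<Sum>s\<le>L. real (L choose s) * \<psi> (Suc s)) = (\<Sum>r\<le>Suc L. a r * \<psi> r)"
    by (subst sum.atMost_Suc_shift) (simp add: a_def)
  moreover have "(\<Sum>s\<le>L. real (L choose s) * \<psi> s) = (\<Sum>r\<le>Suc L. b r * \<psi> r)"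
    by (simp add: b_def)
  moreover have "(avg_op c d ^^ L) \<Phi> (u + unit_vec c) = binom_expect (1/2) L (\<lambda>s. \<psi> (Suc s))"
    unfolding avg_op_iter \<psi>_def by (intro binom_expect_cong) (simp add: scaled_unit_Suc add_ac)
  moreover have "(avg_op c d ^^ L) \<Phi> (u + unit_vec d) = binom_expect (1/2) L \<psi>"
    unfolding avg_op_iter \<psi>_def by (intro binom_expect_cong) (simp add: scaled_unit_Suc add_ac Suc_diff_le)
  ultimately have "(avg_op c d ^^ L) \<Phi> (u + unit_vec c) - (avg_op c d ^^ L) \<Phi> (u + unit_vec d) =
      (\<Sum>r\<le>Suc L. (a r - b r) * \<psi> r) / 2 ^ L"
    by (simp add: binom_expect_half diff_divide_distrib sum_subtractf left_diff_distrib)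
  also have "\<bar>\<dots>\<bar> \<le> (\<Sum>r\<le>Suc L. \<bar>a r - b r\<bar> * B) / 2 ^ L"
  proof -
    have "\<bar>\<Sum>r\<le>Suc L. (a r - b r) * \<psi> r\<bar> \<le> (\<Sum>r\<le>Suc L. \<bar>a r - b r\<bar> * B)"
      by (rule order_trans[OF sum_abs sum_mono]) (simp add: abs_mult \<psi>_def assms mult_left_mono)
    then show ?thesis by (simp add: divide_right_mono)
  qed
  also have "\<dots> = B * (2 * (real (L choose (L div 2)) / 2 ^ L))"
    using sum_abs_binomial_shift_diff[of L] by (simp add: a_def b_def sum_distrib_right[symmetric])
  also have "\<dots> \<le> B * (2 / sqrt (real L + 1))"
    using middle_binomial_le[of L] B by (intro mult_left_mono) auto
  finally show ?thesis .
qed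

lemma symbol_op_avg_op_iter:
  "symbol_op q W ((avg_op c d ^^ L) \<Psi>) = (avg_op c d ^^ L) (symbol_op q W \<Psi>)"
proof (induction L)
  case (Suc L)
  have "symbol_op q W (avg_op c d \<Phi>) = avg_op c d (symbol_op q W \<Phi>)" for \<Phi>
    unfolding symbol_op_def avg_op_def fun_eq_iff
    by (simp add: sum.distrib sum_divide_distrib[symmetric] algebra_simps add_ac)
  then show ?case using Suc.IH by simp
qed simp

lemma symbol_op_abs_le:
  assumes "\<And>y. y \<in> {1..q} \<Longrightarrow> W y \<ge> 0" "\<And>w. \<bar>\<Phi> w\<bar> \<le> B"
  shows "\<bar>symbol_op q W \<Phi> w\<bar> \<le> (\<Sum>y\<in>{1..q}. W y) * B"
  unfolding symbol_op_def sum_distrib_right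
  using assms by (intro order_trans[OF sum_abs sum_mono]) (simp add: abs_mult mult_left_mono)

lemma symbol_op_add:
  "symbol_op q (\<lambda>y. V y + V' y) \<Psi> w = symbol_op q V \<Psi> w + symbol_op q V' \<Psi> w"
  unfolding symbol_op_def by (simp add: distrib_right sum.distrib)

lemma symbol_op_coin:
  assumes "c \<in> {1..q}" "d \<in> {1..q}"
  shows "symbol_op q (\<lambda>y. p / 2 * (of_bool (y = c) + of_bool (y = d))) \<Psi> w = p * avg_op c d \<Psi> w"
proof -
  have "symbol_op q (\<lambda>y. p / 2 * (of_bool (y = c) + of_bool (y = d))) \<Psi> w =
      p / 2 * ((\<Sum>y\<in>{1..q}. of_bool (y = c) * \<Psi> (w + unit_vec y))
        + (\<Sum>y\<in>{1..q}. of_bool (y = d) * \<Psi> (w + unit_vec y)))"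
    unfolding symbol_op_def sum.distrib[symmetric] sum_distrib_left
    by (intro sum.cong refl) (simp add: algebra_simps)
  also have "\<dots> = p * avg_op c d \<Psi> w"
    using assms by (simp add: avg_op_def)
  finally show ?thesis .
qed

section \<open>Lipschitz bound for the noisy composition channel\<close>

definition ncc_l1 :: "nat \<Rightarrow> nat \<Rightarrow> (nat \<Rightarrow> nat \<Rightarrow> real) \<Rightarrow> (nat \<Rightarrow> nat) \<Rightarrow> (nat \<Rightarrow> nat) \<Rightarrow> real" where
  "ncc_l1 q n U t t' = (\<Sum>w\<in>comps q n. \<bar>ncc q n U w t - ncc q n U w t'\<bar>)"

text \<open>Truncated subtraction: \<open>move_dist q t t'\<close> is the number of symbols of a word of
  composition \<open>t\<close> that have to be relabelled to obtain composition \<open>t'\<close>.\<close>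
definition move_dist :: "nat \<Rightarrow> (nat \<Rightarrow> nat) \<Rightarrow> (nat \<Rightarrow> nat) \<Rightarrow> nat" where
  "move_dist q t t' = (\<Sum>c\<in>{1..q}. t c - t' c)"

lemma ncc_l1_triangle: "ncc_l1 q n U t t' \<le> ncc_l1 q n U t s + ncc_l1 q n U s t'"
  unfolding ncc_l1_def sum.distrib[symmetric] by (intro sum_mono) linarith

lemma ncc_l1_scaled:
  "c \<ge> 0 \<Longrightarrow> (\<Sum>w\<in>comps q n. \<bar>c * (ncc q n U w t - ncc q n U w t')\<bar>) = c * ncc_l1 q n U t t'"
  by (simp add: ncc_l1_def abs_mult sum_distrib_left)

lemma move_dist_step:
  assumes "s + unit_vec k = t + unit_vec j" "k \<in> {1..q}" "t' k < t k" "t j < t' j"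
  shows "move_dist q t t' = Suc (move_dist q s t')"
proof -
  have "k \<noteq> j" using assms(3,4) by auto
  have "t c - t' c = (s c - t' c) + of_bool (c = k)" for c
    using fun_cong[OF assms(1), of c] assms(3,4) \<open>k \<noteq> j\<close>
    by (auto simp: unit_vec_def plus_fun_apply split: if_splits)
  then show ?thesis
    using assms(2) by (simp add: move_dist_def sum.distrib)
qed

lemma move_dist_eq_0:
  assumes "t \<in> comps q n" "t' \<in> comps q n" "move_dist q t t' = 0"
  shows "t = t'"
proof
  fix c
  have le: "\<forall>c\<in>{1..q}. t c \<le> t' c" using assms(3) by (simp add: move_dist_def)
  show "t c = t' c"
  proof (cases "c \<in> {1..q}")
    case True
    show ?thesis
    proof (rule ccontr)
      assume "t c \<noteq> t' c"
      then have "t c < t' c" using le True by force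
      then have "(\<Sum>c\<in>{1..q}. t c) < (\<Sum>c\<in>{1..q}. t' c)"
        using le True by (intro sum_strict_mono_ex1) auto
      then show False using comps_sum[OF assms(1)] comps_sum[OF assms(2)] by simp
    qed
  qed (simp add: comps_outside[OF assms(1)] comps_outside[OF assms(2)])
qed

lemma move_dist_Suc_relabel:
  assumes "t \<in> comps q n" "t' \<in> comps q n" "move_dist q t t' = Suc m"
  obtains x p j where "x \<in> vecs q n" "comp q n x = t" "p \<in> {1..n}" "j \<in> {1..q}"
    "move_dist q (comp q n (x(p := j))) t' = m"
proof -
  have "\<exists>k\<in>{1..q}. t' k < t k"
  proof (rule ccontr)
    assume "\<not> ?thesis"
    then have "move_dist q t t' = 0" by (simp add: move_dist_def not_less)
    with assms(3) show False by simp
  qed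
  then obtain k where k: "k \<in> {1..q}" "t' k < t k" by blast
  have "\<exists>j\<in>{1..q}. t j < t' j"
  proof (rule ccontr)
    assume "\<not> ?thesis"
    then have "(\<Sum>c\<in>{1..q}. t' c) < (\<Sum>c\<in>{1..q}. t c)"
      using k by (intro sum_strict_mono_ex1) (auto simp: not_less)
    then show False using comps_sum[OF assms(1)] comps_sum[OF assms(2)] by simp
  qed
  then obtain j where j: "j \<in> {1..q}" "t j < t' j" by blast
  obtain x where x: "x \<in> vecs q n" "comp q n x = t" using comps_has_vec[OF assms(1)] by blast
  have "{i\<in>{1..n}. x i = k} \<noteq> {}"
  proof
    assume "{i\<in>{1..n}. x i = k} = {}"
    then have "t k = 0" using x(2)[symmetric] k(1) by (simp add: comp_def)
    then show False using k(2) by simp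
  qed
  then obtain p where p: "p \<in> {1..n}" "x p = k" by blast
  have "comp q n (x(p := j)) + unit_vec k = t + unit_vec j"
    using comp_update[OF x(1) p(1) j(1)] x(2) p(2) by simp
  then have "move_dist q (comp q n (x(p := j))) t' = m"
    using move_dist_step[OF _ k(1) k(2) j(2)] assms(3) by simp
  then show ?thesis by (rule that[OF x p(1) j(1)])
qed

locale positive_channel =
  fixes q :: nat and U :: "nat \<Rightarrow> nat \<Rightarrow> real" and \<delta> :: real
  assumes delta_pos: "0 < \<delta>"
    and delta_le: "\<And>x y. x \<in> {1..q} \<Longrightarrow> y \<in> {1..q} \<Longrightarrow> \<delta> \<le> U y x"
    and row_sum: "\<And>x. x \<in> {1..q} \<Longrightarrow> (\<Sum>y\<in>{1..q}. U y x) = 1"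
begin

lemma delta_le_1:
  assumes "x \<in> {1..q}"
  shows "\<delta> \<le> 1"
proof -
  have "U x x \<le> (\<Sum>y\<in>{1..q}. U y x)"
    using assms delta_le delta_pos by (intro member_le_sum) (auto intro: order_trans[OF less_imp_le])
  then show ?thesis using delta_le[OF assms assms] row_sum[OF assms] by simp
qed

text \<open>With probability \<open>\<delta>\<close> the output symbol is a fair coin between \<open>c\<close> and \<open>d\<close>.\<close>
lemma symbol_op_coin_split:
  assumes "x \<in> {1..q}" "c \<in> {1..q}" "d \<in> {1..q}"
  obtains W where "\<And>\<Psi>. symbol_op q (\<lambda>y. U y x) \<Psi> = (\<lambda>w. \<delta> * avg_op c d \<Psi> w + symbol_op q W \<Psi> w)"
    and "\<And>y. y \<in> {1..q} \<Longrightarrow> W y \<ge> 0"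
    and "(\<Sum>y\<in>{1..q}. W y) = 1 - \<delta>"
proof -
  define W where "W y = U y x - \<delta> / 2 * (of_bool (y = c) + of_bool (y = d))" for y
  have split: "symbol_op q (\<lambda>y. U y x) \<Psi> = (\<lambda>w. \<delta> * avg_op c d \<Psi> w + symbol_op q W \<Psi> w)" for \<Psi>
  proof -
    have "(\<lambda>y. U y x) = (\<lambda>y. \<delta> / 2 * (of_bool (y = c) + of_bool (y = d)) + W y)"
      by (simp add: W_def)
    then show ?thesis by (simp only: symbol_op_add symbol_op_coin[OF assms(2,3)] fun_eq_iff) simp
  qed
  moreover have "W y \<ge> 0" if "y \<in> {1..q}" for y
    using delta_le[OF assms(1) that] delta_pos by (auto simp: W_def)
  moreover have "(\<Sum>y\<in>{1..q}. W y) = 1 - \<delta>"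
  proof -
    have "(\<Sum>y\<in>{1..q}. W y) = symbol_op q W (\<lambda>_. 1) 0"
      by (simp add: symbol_op_def)
    also have "\<dots> = 1 - \<delta>"
      using fun_cong[OF split[of "\<lambda>_. 1"], of 0] row_sum[OF assms(1)] by (simp add: symbol_op_def avg_op_def)
    finally show ?thesis .
  qed
  ultimately show ?thesis using that by blast
qed

text \<open>Each further channel use adds an averaging step with probability \<open>\<delta>\<close> and otherwise only
  shrinks the sup norm, so the number of averaging steps is binomial with parameters
  \<open>card J\<close> and \<open>\<delta>\<close>.\<close>
lemma chan_expect_smoothing:
  assumes "c \<in> {1..q}" "d \<in> {1..q}" "finite J" "\<forall>i\<in>J. x i \<in> {1..q}" "\<And>w. \<bar>\<Phi> w\<bar> \<le> B"
  shows "\<bar>chan_expect U q J x ((avg_op c d ^^ L) \<Phi>) (u + unit_vec c)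
      - chan_expect U q J x ((avg_op c d ^^ L) \<Phi>) (u + unit_vec d)\<bar>
    \<le> B * binom_expect \<delta> (card J) (\<lambda>k. 2 / sqrt (real (L + k) + 1))"
  using assms(3-5)
proof (induction J arbitrary: L \<Phi> B rule: finite_induct)
  case empty
  then show ?case using avg_op_iter_shift_diff by (simp add: chan_expect_empty)
next
  case (insert i J)
  let ?E = "\<lambda>\<Psi> v. chan_expect U q J x \<Psi> v"
  have xi: "x i \<in> {1..q}" using insert.prems by auto
  obtain W where split: "\<And>\<Psi>. symbol_op q (\<lambda>y. U y (x i)) \<Psi> = (\<lambda>w. \<delta> * avg_op c d \<Psi> w + symbol_op q W \<Psi> w)"
    and W_nonneg: "\<And>y. y \<in> {1..q} \<Longrightarrow> W y \<ge> 0" and W_sum: "(\<Sum>y\<in>{1..q}. W y) = 1 - \<delta>"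
    using symbol_op_coin_split[OF xi assms(1,2)] by blast
  have W_bound: "\<bar>symbol_op q W \<Phi> w\<bar> \<le> (1 - \<delta>) * B" for w
    using symbol_op_abs_le[of q W \<Phi> B w, OF W_nonneg insert.prems(2)] W_sum by simp
  have decomp: "chan_expect U q (insert i J) x ((avg_op c d ^^ L) \<Phi>) v =
      \<delta> * ?E ((avg_op c d ^^ Suc L) \<Phi>) v + 1 * ?E ((avg_op c d ^^ L) (symbol_op q W \<Phi>)) v" for v
    unfolding chan_expect_insert[OF insert.hyps] split
    using chan_expect_linear[of U q J x \<delta> "avg_op c d ((avg_op c d ^^ L) \<Phi>)" 1
        "symbol_op q W ((avg_op c d ^^ L) \<Phi>)"]
    by (simp add: symbol_op_avg_op_iter)
  let ?A = "\<lambda>v. ?E ((avg_op c d ^^ Suc L) \<Phi>) v"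
  let ?B = "\<lambda>v. ?E ((avg_op c d ^^ L) (symbol_op q W \<Phi>)) v"
  have "\<bar>chan_expect U q (insert i J) x ((avg_op c d ^^ L) \<Phi>) (u + unit_vec c)
      - chan_expect U q (insert i J) x ((avg_op c d ^^ L) \<Phi>) (u + unit_vec d)\<bar>
      = \<bar>\<delta> * (?A (u + unit_vec c) - ?A (u + unit_vec d)) + (?B (u + unit_vec c) - ?B (u + unit_vec d))\<bar>"
    unfolding decomp by (simp add: algebra_simps)
  also have "\<dots> \<le> \<delta> * \<bar>?A (u + unit_vec c) - ?A (u + unit_vec d)\<bar> + \<bar>?B (u + unit_vec c) - ?B (u + unit_vec d)\<bar>"
    by (rule order_trans[OF abs_triangle_ineq]) (use delta_pos in \<open>simp add: abs_mult\<close>)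
  also have "\<dots> \<le> \<delta> * (B * binom_expect \<delta> (card J) (\<lambda>k. 2 / sqrt (real (Suc L + k) + 1)))
      + (1 - \<delta>) * B * binom_expect \<delta> (card J) (\<lambda>k. 2 / sqrt (real (L + k) + 1))"
  proof -
    have J: "\<forall>i\<in>J. x i \<in> {1..q}" using insert.prems(1) by simp
    show ?thesis
      using insert.IH[OF J insert.prems(2), of "Suc L"] insert.IH[OF J W_bound, of L] delta_pos
      by (intro add_mono mult_left_mono) simp_all
  qed
  also have "\<dots> = B * binom_expect \<delta> (card (insert i J)) (\<lambda>k. 2 / sqrt (real (L + k) + 1))"
    using insert.hyps by (simp add: binom_expect_Suc algebra_simps)
  finally show ?case .
qed

lemma chan_expect_unit_shift_le:
  assumes "finite J" "\<forall>i\<in>J. x i \<in> {1..q}" "c \<in> {1..q}" "d \<in> {1..q}" "\<And>w. \<bar>\<Phi> w\<bar> \<le> 1"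
  shows "\<bar>chan_expect U q J x \<Phi> (unit_vec c) - chan_expect U q J x \<Phi> (unit_vec d)\<bar>
    \<le> 2 / sqrt ((real (card J) + 1) * \<delta>)"
proof -
  have "\<bar>chan_expect U q J x \<Phi> (unit_vec c) - chan_expect U q J x \<Phi> (unit_vec d)\<bar>
      \<le> binom_expect \<delta> (card J) (\<lambda>k. 2 * (1 / sqrt (real k + 1)))"
    using chan_expect_smoothing[OF assms(3,4,1,2,5), where L=0 and u=0] by simp
  also have "\<dots> \<le> 2 * (1 / sqrt ((real (card J) + 1) * \<delta>))"
    unfolding binom_expect_cmult
    by (intro mult_left_mono binom_expect_inverse_sqrt delta_pos delta_le_1[OF assms(3)]) simp
  finally show ?thesis by simp
qed

lemma chan_expect_update_diff:
  assumes x: "x \<in> vecs q n" and p: "p \<in> {1..n}" and y: "y \<in> {1..q}" and \<Phi>: "\<And>w. \<bar>\<Phi> w\<bar> \<le> 1"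
  shows "\<bar>chan_expect U q {1..n} x \<Phi> 0 - chan_expect U q {1..n} (x(p := y)) \<Phi> 0\<bar> \<le> 4 / sqrt (\<delta> * real n)"
proof -
  define J where "J = {1..n} - {p}"
  have J: "finite J" "p \<notin> J" "{1..n} = insert p J" using p by (auto simp: J_def)
  have xJ: "\<forall>i\<in>J. x i \<in> {1..q}" and xp: "x p \<in> {1..q}"
    using x p by (auto simp: J_def vecs_def PiE_iff)
  have one: "1 \<in> {1..q}" using y by auto
  define G where "G z = chan_expect U q J x \<Phi> (unit_vec z)" for z
  define \<beta> where "\<beta> = 2 / sqrt (\<delta> * real n)"
  have G_close: "\<bar>G z - G 1\<bar> \<le> \<beta>" if "z \<in> {1..q}" for z
  proof -
    have "real (card J) + 1 = real n" using p by (simp add: J_def)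
    then show ?thesis
      using chan_expect_unit_shift_le[OF J(1) xJ that one \<Phi>] by (simp add: G_def \<beta>_def mult.commute)
  qed
  have "chan_expect U q {1..n} x \<Phi> 0 - chan_expect U q {1..n} (x(p := y)) \<Phi> 0
      = (\<Sum>z\<in>{1..q}. (U z (x p) - U z y) * G z)"
  proof -
    have "chan_expect U q J (x(p := y)) \<Phi> u = chan_expect U q J x \<Phi> u" for u
      using J(2) by (intro chan_expect_cong) auto
    then show ?thesis
      unfolding J(3) chan_expect_insert_first[OF J(1,2)]
      by (simp add: G_def sum_subtractf left_diff_distrib)
  qed
  also have "\<dots> = (\<Sum>z\<in>{1..q}. (U z (x p) - U z y) * (G z - G 1))"
    using row_sum[OF xp] row_sum[OF y]
    by (simp add: right_diff_distrib sum_subtractf sum_distrib_right[symmetric])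
  finally have "\<bar>chan_expect U q {1..n} x \<Phi> 0 - chan_expect U q {1..n} (x(p := y)) \<Phi> 0\<bar>
      \<le> (\<Sum>z\<in>{1..q}. \<bar>(U z (x p) - U z y) * (G z - G 1)\<bar>)"
    by simp
  also have "\<dots> \<le> (\<Sum>z\<in>{1..q}. (U z (x p) + U z y) * \<beta>)"
  proof (intro sum_mono)
    fix z assume z: "z \<in> {1..q}"
    have "\<bar>U z (x p) - U z y\<bar> \<le> U z (x p) + U z y"
      using delta_le[OF xp z] delta_le[OF y z] delta_pos by simp
    then show "\<bar>(U z (x p) - U z y) * (G z - G 1)\<bar> \<le> (U z (x p) + U z y) * \<beta>"
      unfolding abs_mult using G_close[OF z] by (intro mult_mono) auto
  qed
  also have "\<dots> = ((\<Sum>z\<in>{1..q}. U z (x p)) + (\<Sum>z\<in>{1..q}. U z y)) * \<beta>"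
    by (simp only: sum_distrib_right[symmetric] sum.distrib)
  also have "\<dots> = 4 / sqrt (\<delta> * real n)"
    using row_sum[OF xp] row_sum[OF y] by (simp add: \<beta>_def)
  finally show ?thesis .
qed

lemma ncc_l1_update:
  assumes "x \<in> vecs q n" "p \<in> {1..n}" "y \<in> {1..q}"
  shows "ncc_l1 q n U (comp q n x) (comp q n (x(p := y))) \<le> 4 / sqrt (\<delta> * real n)"
proof -
  let ?t = "comp q n x" and ?t' = "comp q n (x(p := y))"
  define \<sigma> where "\<sigma> w = sgn (ncc q n U w ?t - ncc q n U w ?t')" for w
  have "ncc_l1 q n U ?t ?t' = (\<Sum>w\<in>comps q n. \<sigma> w * ncc q n U w ?t) - (\<Sum>w\<in>comps q n. \<sigma> w * ncc q n U w ?t')"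
    unfolding ncc_l1_def sum_subtractf[symmetric] right_diff_distrib[symmetric] \<sigma>_def
    by (intro sum.cong refl) (simp add: sgn_mult_self_eq abs_sgn)
  also have "\<dots> = chan_expect U q {1..n} x \<sigma> 0 - chan_expect U q {1..n} (x(p := y)) \<sigma> 0"
    using sum_ncc_eq_chan_expect[OF assms(1) refl] sum_ncc_eq_chan_expect[OF vecs_update[OF assms] refl] by simp
  also have "\<dots> \<le> 4 / sqrt (\<delta> * real n)"
  proof -
    have "\<bar>\<sigma> w\<bar> \<le> 1" for w by (simp add: \<sigma>_def abs_sgn_eq)
    then have "\<bar>chan_expect U q {1..n} x \<sigma> 0 - chan_expect U q {1..n} (x(p := y)) \<sigma> 0\<bar>
        \<le> 4 / sqrt (\<delta> * real n)"
      by (rule chan_expect_update_diff[OF assms])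
    then show ?thesis by simp
  qed
  finally show ?thesis .
qed

lemma ncc_l1_le_move_dist:
  assumes "t \<in> comps q n" "t' \<in> comps q n"
  shows "ncc_l1 q n U t t' \<le> move_dist q t t' * (4 / sqrt (\<delta> * real n))"
  using assms(1)
proof (induction "move_dist q t t'" arbitrary: t)
  case 0
  then have "t = t'" using move_dist_eq_0[OF _ assms(2)] by simp
  then show ?case by (simp add: ncc_l1_def move_dist_def)
next
  case (Suc m)
  obtain x p j where x: "x \<in> vecs q n" "comp q n x = t" and p: "p \<in> {1..n}" and j: "j \<in> {1..q}"
    and m: "move_dist q (comp q n (x(p := j))) t' = m"
    by (rule move_dist_Suc_relabel[OF Suc.prems assms(2) Suc.hyps(2)[symmetric]])
  let ?s = "comp q n (x(p := j))"
  have "ncc_l1 q n U ?s t' \<le> m * (4 / sqrt (\<delta> * real n))"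
    using Suc.hyps(1)[OF m[symmetric] comp_in_comps[OF vecs_update[OF x(1) p j]]] m by simp
  moreover have "ncc_l1 q n U t ?s \<le> 4 / sqrt (\<delta> * real n)"
    using ncc_l1_update[OF x(1) p j] x(2) by simp
  moreover have "real (move_dist q t t') * (4 / sqrt (\<delta> * real n))
      = 4 / sqrt (\<delta> * real n) + m * (4 / sqrt (\<delta> * real n))"
    using Suc.hyps(2)[symmetric] by (simp add: distrib_right add_divide_distrib)
  ultimately show ?case using ncc_l1_triangle[of q n U t t' ?s] by linarith
qed

end

lemma positive_channel_min_entry:
  assumes "q \<ge> 1" "\<forall>x\<in>{1..q}. \<forall>y\<in>{1..q}. U y x > 0" "\<forall>x\<in>{1..q}. (\<Sum>y\<in>{1..q}. U y x) = 1"
  shows "positive_channel q U (Min ((\<lambda>(x, y). U y x) ` ({1..q} \<times> {1..q})))"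
proof
  let ?S = "(\<lambda>(x, y). U y x) ` ({1..q} \<times> {1..q})"
  have S: "finite ?S" "?S \<noteq> {}" using assms(1) by auto
  then show "0 < Min ?S" using assms(2) by (auto simp: Min_gr_iff)
  show "Min ?S \<le> U y x" if "x \<in> {1..q}" "y \<in> {1..q}" for x y
    using S(1) that by (intro Min_le) force+
  show "(\<Sum>y\<in>{1..q}. U y x) = 1" if "x \<in> {1..q}" for x
    using assms(3) that by blast
qed

section \<open>Cells\<close>

definition cell_index :: "nat \<Rightarrow> nat \<Rightarrow> (nat \<Rightarrow> nat) \<Rightarrow> nat \<Rightarrow> nat" where
  "cell_index q a t = (\<lambda>i. if i \<in> {1..q-1} then t i div a + 1 else undefined)"

lemma cell_bounds_iff:
  assumes "a \<ge> 1" "l \<ge> 1"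
  shows "((int l - 1) * int a \<le> int s \<and> int s \<le> int l * int a - 1) \<longleftrightarrow> l = s div a + 1"
proof -
  obtain m where m: "l = Suc m" using assms(2) by (cases l) auto
  have "(int l - 1) * int a = int (m * a)" "int l * int a - 1 = int (Suc m * a) - 1"
    unfolding m by (simp_all add: algebra_simps)
  then have "((int l - 1) * int a \<le> int s \<and> int s \<le> int l * int a - 1) \<longleftrightarrow> (m * a \<le> s \<and> s < Suc m * a)"
    by linarith
  also have "\<dots> \<longleftrightarrow> m = s div a"
  proof
    assume "m * a \<le> s \<and> s < Suc m * a"
    then show "m = s div a" by (intro div_nat_eqI[symmetric]) (simp_all add: mult.commute)
  next
    assume "m = s div a"
    then show "m * a \<le> s \<and> s < Suc m * a"
      using div_times_less_eq_dividend[of s a] dividend_less_div_times[of a s] assms(1) by simp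
  qed
  finally show ?thesis using m by simp
qed

lemma cell_index_le_nu:
  assumes "a \<ge> 1" "s \<le> n"
  shows "s div a + 1 \<le> nu n a"
proof -
  have "real (s div a) \<le> real s / real a" by (rule of_nat_div_le_of_nat)
  also have "\<dots> < real (n + 1) / real a" using assms by (intro divide_strict_right_mono) auto
  also have "\<dots> \<le> real_of_int \<lceil>real (n + 1) / real a\<rceil>" by (rule le_of_int_ceiling)
  finally have "int (s div a) < \<lceil>real (n + 1) / real a\<rceil>" by linarith
  then show ?thesis unfolding nu_def by linarith
qed

lemma cell_subset_comps: "cell q n a l \<subseteq> comps q n"
  by (auto simp: cell_def)

lemma finite_Vset: "finite (Vset q n a)"
  by (rule finite_subset[of _ "cellidx q n a"]) (auto simp: Vset_def cellidx_def finite_PiE)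

lemma in_cell_index:
  assumes "a \<ge> 1" "t \<in> comps q n"
  shows "cell_index q a t \<in> Vset q n a" "t \<in> cell q n a (cell_index q a t)"
proof -
  have "cell_index q a t \<in> cellidx q n a"
    unfolding cellidx_def cell_index_def using cell_index_le_nu[OF assms(1) comps_le[OF assms(2)]]
    by (auto simp: PiE_iff extensional_def)
  moreover have "t \<in> cell q n a (cell_index q a t)"
    unfolding cell_def using assms(2) cell_bounds_iff[OF assms(1), of "t _ div a + 1"]
    by (simp add: cell_index_def)
  ultimately show "cell_index q a t \<in> Vset q n a" "t \<in> cell q n a (cell_index q a t)"
    unfolding Vset_def by auto
qed

lemma cell_index_unique:
  assumes "a \<ge> 1" "l \<in> cellidx q n a" "t \<in> cell q n a l"
  shows "l = cell_index q a t"
proof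
  fix i
  show "l i = cell_index q a t i"
  proof (cases "i \<in> {1..q-1}")
    case True
    then have "l i \<ge> 1" using assms(2) by (auto simp: cellidx_def PiE_iff)
    moreover have "(int (l i) - 1) * int a \<le> int (t i) \<and> int (t i) \<le> int (l i) * int a - 1"
      using True assms(3) unfolding cell_def by blast
    ultimately show ?thesis using True cell_bounds_iff[OF assms(1)] by (simp add: cell_index_def)
  next
    case False
    then show ?thesis using assms(2) by (auto simp: cellidx_def PiE_iff extensional_def cell_index_def)
  qed
qed

lemma cells_disjoint:
  assumes "a \<ge> 1" "l \<in> Vset q n a" "l' \<in> Vset q n a" "t \<in> cell q n a l" "t \<in> cell q n a l'"
  shows "l = l'"
  using cell_index_unique[OF assms(1) _ assms(4)] cell_index_unique[OF assms(1) _ assms(5)] assms(2,3)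
  by (auto simp: Vset_def)

lemma sum_over_cells:
  assumes "a \<ge> 1"
  shows "(\<Sum>t\<in>comps q n. f t) = (\<Sum>l\<in>Vset q n a. \<Sum>t\<in>cell q n a l. f t)"
proof -
  have "{t\<in>comps q n. cell_index q a t = l} = cell q n a l" if "l \<in> Vset q n a" for l
    using that in_cell_index(2)[OF assms] cell_index_unique[OF assms] cell_subset_comps[of q n a l]
    by (auto simp: Vset_def)
  moreover have "(\<Sum>l\<in>Vset q n a. \<Sum>t\<in>{t\<in>comps q n. cell_index q a t = l}. f t) = (\<Sum>t\<in>comps q n. f t)"
    by (rule sum.group[OF finite_comps finite_Vset]) (use in_cell_index(1)[OF assms] in blast)
  ultimately show ?thesis by simp
qed

lemma nu_le:
  assumes "1 \<le> a" "a \<le> n"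
  shows "real (nu n a) \<le> 2 * real n / real a"
proof -
  have a: "real a > 0" using assms by simp
  have "real_of_int \<lceil>real (n + 1) / real a\<rceil> < real (n + 1) / real a + 1" by linarith
  then have "real_of_int \<lceil>real (n + 1) / real a\<rceil> * real a < real (n + 1) + real a"
    using a by (simp add: field_simps)
  then have "real_of_int (\<lceil>real (n + 1) / real a\<rceil> * int a) < real_of_int (int (n + 1) + int a)"
    by simp
  then have "\<lceil>real (n + 1) / real a\<rceil> * int a \<le> int n + int a"
    by (simp only: of_int_less_iff)
  then have "real_of_int (\<lceil>real (n + 1) / real a\<rceil> * int a) \<le> real_of_int (int n + int a)"
    by linarith
  then have "real_of_int \<lceil>real (n + 1) / real a\<rceil> * real a \<le> real n + real a"
    by simp
  moreover have "real (nu n a) = real_of_int \<lceil>real (n + 1) / real a\<rceil>"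
    unfolding nu_def by (simp add: order.strict_trans2[OF _ divide_nonneg_nonneg])
  ultimately have "real (nu n a) * real a \<le> real n + real a" by simp
  then have "real (nu n a) \<le> (real n + real a) / real a" using a by (simp add: field_simps)
  also have "\<dots> \<le> 2 * real n / real a" using assms a by (intro divide_right_mono) auto
  finally show ?thesis .
qed

lemma card_Vset_le:
  assumes "a \<in> {1..n}"
  shows "real (card (Vset q n a)) \<le> (2 * real n / real a) ^ (q - 1)"
proof -
  have "card (Vset q n a) \<le> card (cellidx q n a)"
    by (rule card_mono) (auto simp: cellidx_def finite_PiE Vset_def)
  also have "card (cellidx q n a) = nu n a ^ (q - 1)"
    by (simp add: cellidx_def card_PiE)
  finally have "real (card (Vset q n a)) \<le> real (nu n a) ^ (q - 1)"
    by (simp flip: of_nat_power)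
  also have "\<dots> \<le> (2 * real n / real a) ^ (q - 1)"
    using assms by (intro power_mono nu_le) auto
  finally show ?thesis .
qed

lemma move_dist_le_sum_abs:
  assumes "q \<ge> 1" "t \<in> comps q n" "s \<in> comps q n"
  shows "real (move_dist q t s) \<le> (\<Sum>c\<in>{1..q-1}. \<bar>real (t c) - real (s c)\<bar>)"
proof -
  define P where "P c = max 0 (real (t c) - real (s c))" for c
  define N where "N c = max 0 (real (s c) - real (t c))" for c
  have ins: "{1..q} = insert q {1..q-1}" using assms(1) by auto
  have qn: "q \<notin> {1..q-1}" by auto
  have "real (move_dist q t s) = (\<Sum>c\<in>{1..q}. P c)"
    unfolding move_dist_def P_def by (simp add: of_nat_diff_if) (intro sum.cong refl, simp add: of_nat_diff)
  also have "\<dots> = P q + (\<Sum>c\<in>{1..q-1}. P c)" unfolding ins using qn by simp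
  also have "P q \<le> (\<Sum>c\<in>{1..q-1}. N c)"
  proof -
    \<comment> \<open>both compositions have the same total \<open>n\<close>, so the excess in the last coordinate is
      compensated by deficits in the first \<open>q - 1\<close>\<close>
    have "(\<Sum>c\<in>{1..q}. real (t c)) = (\<Sum>c\<in>{1..q}. real (s c))"
      using comps_sum[OF assms(2)] comps_sum[OF assms(3)] by (simp flip: of_nat_sum)
    then have "real (t q) - real (s q) = (\<Sum>c\<in>{1..q-1}. real (s c) - real (t c))"
      unfolding ins using qn by (simp add: sum_subtractf)
    also have "\<dots> \<le> (\<Sum>c\<in>{1..q-1}. N c)" by (intro sum_mono) (simp add: N_def)
    finally show ?thesis unfolding P_def using sum_nonneg[of "{1..q-1}" N] by (simp add: N_def)
  qed
  also have "(\<Sum>c\<in>{1..q-1}. N c) + (\<Sum>c\<in>{1..q-1}. P c) = (\<Sum>c\<in>{1..q-1}. \<bar>real (t c) - real (s c)\<bar>)"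
    unfolding sum.distrib[symmetric] by (intro sum.cong refl) (simp add: N_def P_def)
  finally show ?thesis by simp
qed

lemma cells_coord_dist_le:
  assumes "a \<ge> 1" "i \<in> {1..q-1}" "t \<in> cell q n a l" "s \<in> cell q n a l'"
    and "\<bar>int (l i) - int (l' i)\<bar> \<le> int d"
  shows "\<bar>real (t i) - real (s i)\<bar> \<le> (real d + 1) * real a"
proof -
  have t: "(int (l i) - 1) * int a \<le> int (t i)" "int (t i) \<le> int (l i) * int a - 1"
    using assms(2,3) unfolding cell_def by blast+
  have s: "(int (l' i) - 1) * int a \<le> int (s i)" "int (s i) \<le> int (l' i) * int a - 1"
    using assms(2,4) unfolding cell_def by blast+
  have "(int (l i) - int (l' i) + 1) * int a \<le> (int d + 1) * int a"
    "(int (l' i) - int (l i) + 1) * int a \<le> (int d + 1) * int a"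
    using assms(5) by (intro mult_right_mono; simp)+
  moreover have "int (t i) - int (s i) \<le> (int (l i) - int (l' i) + 1) * int a"
    "int (s i) - int (t i) \<le> (int (l' i) - int (l i) + 1) * int a"
    using t s by (simp_all add: algebra_simps)
  ultimately have "\<bar>int (t i) - int (s i)\<bar> \<le> (int d + 1) * int a" by linarith
  then have "real_of_int \<bar>int (t i) - int (s i)\<bar> \<le> real_of_int ((int d + 1) * int a)"
    by (simp only: of_int_le_iff)
  then show ?thesis by simp
qed

lemma move_dist_cells_le:
  assumes "q \<ge> 1" "a \<ge> 1" "t \<in> cell q n a l" "s \<in> cell q n a l'"
    and "\<And>i. i \<in> {1..q-1} \<Longrightarrow> \<bar>int (l i) - int (l' i)\<bar> \<le> int d"
  shows "real (move_dist q t s) \<le> real (q - 1) * ((real d + 1) * real a)"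
proof -
  have "real (move_dist q t s) \<le> (\<Sum>c\<in>{1..q-1}. \<bar>real (t c) - real (s c)\<bar>)"
    by (rule move_dist_le_sum_abs[OF assms(1)]) (use assms(3,4) cell_subset_comps in blast)+
  also have "\<dots> \<le> (\<Sum>c\<in>{1..q-1}. (real d + 1) * real a)"
    by (intro sum_mono cells_coord_dist_le[OF assms(2) _ assms(3,4) assms(5)])
  finally show ?thesis by simp
qed

lemma adjacent_coord_dist_le:
  assumes "adjacent q l l'" "i \<in> {1..q-1}"
  shows "\<bar>int (l i) - int (l' i)\<bar> \<le> 1"
  using assms unfolding adjacent_def by (elim conjE disjE bexE) fastforce+

lemma flr_le: "M > 0 \<Longrightarrow> flr M x \<le> x"
  unfolding flr_def by (simp add: divide_le_eq mult.commute)

lemma flr_gt: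
  assumes "M > 0"
  shows "x - flr M x < 1 / real M"
proof -
  have "real M * x < real_of_int \<lfloor>real M * x\<rfloor> + 1" by linarith
  then have "x < (real_of_int \<lfloor>real M * x\<rfloor> + 1) / real M" using assms by (simp add: field_simps)
  then show ?thesis unfolding flr_def using assms by (simp add: add_divide_distrib)
qed

lemma flr_nonneg: "x \<ge> 0 \<Longrightarrow> flr M x \<ge> 0"
  unfolding flr_def by simp

lemma flr_multiple: "\<exists>k::int. flr M x = real_of_int k / real M"
  unfolding flr_def by blast

lemma sum_multiples:
  assumes "finite S" "\<And>s. s \<in> S \<Longrightarrow> \<exists>k::int. h s = real_of_int k / real M"
  shows "\<exists>k::int. (\<Sum>s\<in>S. h s) = real_of_int k / real M"
  using assms
proof (induction S rule: finite_induct)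
  case empty
  then show ?case by (intro exI[of _ 0]) simp
next
  case (insert x S)
  obtain k1 k2 where "h x = real_of_int k1 / real M" "(\<Sum>s\<in>S. h s) = real_of_int k2 / real M"
    using insert by blast
  then show ?case using insert.hyps by (intro exI[of _ "k1 + k2"]) (simp add: add_divide_distrib)
qed

lemma sum_by_parts:
  fixes F :: "nat \<Rightarrow> real"
  assumes "\<rho> 0 = 0"
  shows "(\<Sum>i=1..N. (\<rho> i - \<rho> (i - 1)) * F i) = \<rho> N * F N + (\<Sum>i=1..<N. \<rho> i * (F i - F (Suc i)))"
proof (induction N)
  case (Suc N)
  have "(\<Sum>i=1..<Suc N. \<rho> i * (F i - F (Suc i))) = (\<Sum>i=1..<N. \<rho> i * (F i - F (Suc i))) + \<rho> N * (F N - F (Suc N))"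
    using assms by (cases N) simp_all
  then show ?case using Suc.IH by (simp add: algebra_simps)
qed (simp add: assms)

section \<open>The quantizer\<close>

lemma sum_abs_sum_le_swap:
  fixes F :: "'a \<Rightarrow> 'b \<Rightarrow> real"
  assumes "finite I"
  shows "(\<Sum>w\<in>W. \<bar>\<Sum>k\<in>I. F k w\<bar>) \<le> (\<Sum>k\<in>I. \<Sum>w\<in>W. \<bar>F k w\<bar>)"
proof -
  have "(\<Sum>w\<in>W. \<bar>\<Sum>k\<in>I. F k w\<bar>) \<le> (\<Sum>w\<in>W. \<Sum>k\<in>I. \<bar>F k w\<bar>)"
    by (intro sum_mono sum_abs)
  also have "\<dots> = (\<Sum>k\<in>I. \<Sum>w\<in>W. \<bar>F k w\<bar>)" by (rule sum.swap)
  finally show ?thesis .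
qed

locale quantizer =
  fixes q n a M :: nat and Qip :: "(nat \<Rightarrow> nat) \<Rightarrow> real" and rep :: "(nat \<Rightarrow> nat) \<Rightarrow> nat \<Rightarrow> nat"
    and g :: "nat \<Rightarrow> nat \<Rightarrow> nat"
  assumes q2: "q \<ge> 2" and a1: "a \<ge> 1" and M2: "M \<ge> 2"
    and dist: "is_dist q n Qip"
    and rep_in_cell: "\<forall>l\<in>Vset q n a. rep l \<in> cell q n a l"
    and gray: "gray_like q n a g"
begin

abbreviation "V \<equiv> Vset q n a"
abbreviation "N \<equiv> card (Vset q n a)"
abbreviation "Qa \<equiv> stageI q n a M Qip rep"
abbreviation "Qhat \<equiv> quant q n a M Qip rep g"
abbreviation "R i \<equiv> Rval Qa M rep g i"

definition resid :: "(nat \<Rightarrow> nat) \<Rightarrow> real" where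
  "resid t = Qip t - flr M (Qip t)"

definition carry :: "nat \<Rightarrow> real" where
  "carry i = R i - flr M (R i)"

lemma M_pos: "M > 0" using M2 by simp

lemma resid_nonneg: "resid t \<ge> 0"
  using flr_le[OF M_pos] by (simp add: resid_def)

lemma resid_le: "t \<in> comps q n \<Longrightarrow> resid t \<le> Qip t"
  using flr_nonneg dist by (simp add: resid_def is_dist_def)

lemma carry_bounds: "0 \<le> carry i" "carry i < 1 / real M"
  using flr_le[OF M_pos, of "R i"] flr_gt[OF M_pos, of "R i"] by (auto simp: carry_def)

lemma rep_in_comps: "l \<in> V \<Longrightarrow> rep l \<in> comps q n"
  using rep_in_cell cell_subset_comps by blast

lemma g_bij: "bij_betw g {1..N} V"
  using gray by (simp add: gray_like_def)

lemma g_adjacent: "j \<in> {1..<N} \<Longrightarrow> adjacent q (g j) (g (Suc j))"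
  using gray by (simp add: gray_like_def)

lemma g_in_V: "i \<in> {1..N} \<Longrightarrow> g i \<in> V"
  using g_bij by (auto simp: bij_betw_def)

lemma inj_on_rep_g: "inj_on (\<lambda>i. rep (g i)) {1..N}"
proof -
  have "inj_on rep V"
  proof
    fix l l' assume "l \<in> V" "l' \<in> V" "rep l = rep l'"
    then show "l = l'" using cells_disjoint[OF a1] rep_in_cell by metis
  qed
  then have "inj_on (rep \<circ> g) {1..N}"
    using g_bij by (intro comp_inj_on) (auto simp: bij_betw_def)
  then show ?thesis by (simp add: o_def)
qed

lemma rep_g_image: "(\<lambda>i. rep (g i)) ` {1..N} = rep ` V"
proof -
  have "rep ` V = rep ` g ` {1..N}" using g_bij by (simp add: bij_betw_def)
  then show ?thesis by (simp add: image_image)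
qed

lemma stageI_sum_identity:
  "(\<Sum>t\<in>comps q n. (Qip t - Qa t) * f t) = (\<Sum>l\<in>V. \<Sum>t\<in>cell q n a l. resid t * (f t - f (rep l)))"
proof -
  define X where "X l = (\<Sum>t'\<in>cell q n a l. resid t')" for l
  have "(Qip t - Qa t) * f t = resid t * f t - (\<Sum>l\<in>{l\<in>V. rep l = t}. X l * f (rep l))" for t
  proof -
    have "(\<Sum>l\<in>{l\<in>V. rep l = t}. X l * f (rep l)) = (\<Sum>l\<in>{l\<in>V. rep l = t}. X l) * f t"
      by (simp add: sum_distrib_right)
    then show ?thesis by (simp add: stageI_def X_def resid_def algebra_simps)
  qed
  then have "(\<Sum>t\<in>comps q n. (Qip t - Qa t) * f t) =
      (\<Sum>t\<in>comps q n. resid t * f t) - (\<Sum>t\<in>comps q n. \<Sum>l\<in>{l\<in>V. rep l = t}. X l * f (rep l))"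
    by (simp add: sum_subtractf)
  also have "(\<Sum>t\<in>comps q n. \<Sum>l\<in>{l\<in>V. rep l = t}. X l * f (rep l)) = (\<Sum>l\<in>V. X l * f (rep l))"
    by (rule sum.group[OF finite_Vset finite_comps]) (use rep_in_comps in auto)
  also have "(\<Sum>t\<in>comps q n. resid t * f t) = (\<Sum>l\<in>V. \<Sum>t\<in>cell q n a l. resid t * f t)"
    by (rule sum_over_cells[OF a1])
  finally show ?thesis
    by (simp add: X_def sum_subtractf[symmetric] sum_distrib_right right_diff_distrib)
qed

lemma quant_rep:
  assumes "i \<in> {1..N}"
  shows "Qhat (rep (g i)) = (if i < N then flr M (R i) else R i)"
proof -
  have ex: "\<exists>j\<in>{1..N}. rep (g j) = rep (g i)" using assms by blast
  have "(THE j. j \<in> {1..N} \<and> rep (g j) = rep (g i)) = i"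
    using assms inj_on_rep_g by (intro the_equality) (auto dest: inj_onD)
  then show ?thesis unfolding quant_def Let_def using ex by simp
qed

lemma quant_nonrep:
  assumes "t \<notin> (\<lambda>i. rep (g i)) ` {1..N}"
  shows "Qhat t = Qa t"
  using assms unfolding quant_def Let_def by auto

lemma stageI_rep_eq:
  assumes "i \<in> {1..N}"
  shows "Qa (rep (g i)) = R i - (if i = 1 then 0 else carry (i - 1))"
proof (cases "i = 1")
  case False
  then obtain k where "i = Suc (Suc k)" using assms by (cases i; cases "i - 1") auto
  then show ?thesis by (simp add: Rval_def carry_def)
qed (simp add: Rval_def)

lemma stageII_sum_identity:
  "(\<Sum>t\<in>comps q n. (Qa t - Qhat t) * f t) = (\<Sum>i\<in>{1..<N}. carry i * (f (rep (g i)) - f (rep (g (Suc i)))))"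
proof -
  define \<rho> where "\<rho> i = (if 1 \<le> i \<and> i < N then carry i else 0)" for i
  have "(\<Sum>t\<in>comps q n. (Qa t - Qhat t) * f t) = (\<Sum>t\<in>(\<lambda>i. rep (g i)) ` {1..N}. (Qa t - Qhat t) * f t)"
    using rep_g_image rep_in_comps by (intro sum.mono_neutral_right finite_comps) (auto simp: quant_nonrep)
  also have "\<dots> = (\<Sum>i\<in>{1..N}. (Qa (rep (g i)) - Qhat (rep (g i))) * f (rep (g i)))"
    using sum.reindex[OF inj_on_rep_g, of "\<lambda>t. (Qa t - Qhat t) * f t"] by (simp add: o_def)
  also have "\<dots> = (\<Sum>i\<in>{1..N}. (\<rho> i - \<rho> (i - 1)) * f (rep (g i)))"
  proof (intro sum.cong refl)
    fix i assume i: "i \<in> {1..N}"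
    show "(Qa (rep (g i)) - Qhat (rep (g i))) * f (rep (g i)) = (\<rho> i - \<rho> (i - 1)) * f (rep (g i))"
      unfolding quant_rep[OF i] stageI_rep_eq[OF i] using i by (auto simp: \<rho>_def carry_def)
  qed
  also have "\<dots> = (\<Sum>i\<in>{1..<N}. carry i * (f (rep (g i)) - f (rep (g (Suc i)))))"
    by (subst sum_by_parts) (simp_all add: \<rho>_def)
  finally show ?thesis .
qed

lemma stageI_nonneg: "t \<in> comps q n \<Longrightarrow> Qa t \<ge> 0"
  using dist flr_nonneg resid_nonneg unfolding stageI_def resid_def[symmetric] is_dist_def
  by (simp add: sum_nonneg)

lemma R_nonneg:
  assumes "i \<in> {1..N}"
  shows "R i \<ge> 0"
proof -
  have "0 \<le> Qa (rep (g i))" "0 \<le> carry (i - 1)"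
    using stageI_nonneg[OF rep_in_comps[OF g_in_V[OF assms]]] carry_bounds(1) by auto
  then show ?thesis using stageI_rep_eq[OF assms] by (simp split: if_splits)
qed

lemma quant_nonneg: "t \<in> comps q n \<Longrightarrow> Qhat t \<ge> 0"
proof (cases "t \<in> (\<lambda>i. rep (g i)) ` {1..N}")
  case True
  then obtain i where "i \<in> {1..N}" "t = rep (g i)" by blast
  then show ?thesis using quant_rep R_nonneg flr_nonneg by simp
qed (simp add: quant_nonrep stageI_nonneg)

lemma sum_quant: "(\<Sum>t\<in>comps q n. Qhat t) = 1"
proof -
  have "(\<Sum>t\<in>comps q n. Qip t - Qa t) = 0" "(\<Sum>t\<in>comps q n. Qa t - Qhat t) = 0"
    using stageI_sum_identity[of "\<lambda>_. 1"] stageII_sum_identity[of "\<lambda>_. 1"] by simp_all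
  moreover have "(\<Sum>t\<in>comps q n. Qip t) = 1" using dist by (simp add: is_dist_def)
  ultimately show ?thesis by (simp add: sum_subtractf)
qed

lemma quant_multiple_but_last:
  assumes "N = 0 \<or> t \<noteq> rep (g N)"
  shows "\<exists>k::int. Qhat t = real_of_int k / real M"
proof (cases "t \<in> (\<lambda>i. rep (g i)) ` {1..N}")
  case True
  then obtain i where i: "i \<in> {1..N}" "t = rep (g i)" by blast
  then have "i < N" using assms by (cases "i = N") auto
  then show ?thesis using quant_rep[OF i(1)] i flr_multiple by simp
next
  case False
  then have no_cell: "{l\<in>V. rep l = t} = {}" using rep_g_image by auto
  have "Qa t = flr M (Qip t)" unfolding stageI_def no_cell by simp
  then show ?thesis using quant_nonrep[OF False] flr_multiple by simp
qed

text \<open>At the last representative the value is not a floor, but it is the total mass \<open>1\<close> minus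
  multiples of \<open>1/M\<close>.\<close>
lemma quant_multiple:
  assumes "t \<in> comps q n"
  shows "\<exists>k::int. Qhat t = real_of_int k / real M"
proof (cases "N \<noteq> 0 \<and> t = rep (g N)")
  case True
  obtain k where k: "(\<Sum>s\<in>comps q n - {t}. Qhat s) = real_of_int k / real M"
    using sum_multiples[of "comps q n - {t}" Qhat M] finite_comps True quant_multiple_but_last by auto
  have "1 = Qhat t + (\<Sum>s\<in>comps q n - {t}. Qhat s)"
    using sum_quant sum.remove[OF finite_comps assms, of Qhat] by simp
  then have "Qhat t = real_of_int (int M - k) / real M" using k M_pos by (simp add: field_simps)
  then show ?thesis by blast
qed (rule quant_multiple_but_last, blast)

lemma M_type_quant: "M_type q n M Qhat"
  unfolding M_type_def is_dist_def using quant_nonneg sum_quant quant_multiple by auto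

context
  fixes U :: "nat \<Rightarrow> nat \<Rightarrow> real" and K :: real
  assumes lipschitz: "\<And>t t'. t \<in> comps q n \<Longrightarrow> t' \<in> comps q n \<Longrightarrow> ncc_l1 q n U t t' \<le> move_dist q t t' * K"
    and K_nonneg: "K \<ge> 0"
begin

lemma stageI_out_l1_le:
  "(\<Sum>w\<in>comps q n. \<bar>\<Sum>t\<in>comps q n. (Qip t - Qa t) * ncc q n U w t\<bar>) \<le> real (q - 1) * real a * K"
proof -
  let ?W = "comps q n"
  have "(\<Sum>w\<in>?W. \<bar>\<Sum>t\<in>?W. (Qip t - Qa t) * ncc q n U w t\<bar>)
      \<le> (\<Sum>l\<in>V. \<Sum>w\<in>?W. \<bar>\<Sum>t\<in>cell q n a l. resid t * (ncc q n U w t - ncc q n U w (rep l))\<bar>)"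
    unfolding stageI_sum_identity by (rule sum_abs_sum_le_swap[OF finite_Vset])
  also have "\<dots> \<le> (\<Sum>l\<in>V. \<Sum>t\<in>cell q n a l. \<Sum>w\<in>?W. \<bar>resid t * (ncc q n U w t - ncc q n U w (rep l))\<bar>)"
    by (intro sum_mono sum_abs_sum_le_swap finite_subset[OF cell_subset_comps finite_comps])
  also have "\<dots> \<le> (\<Sum>l\<in>V. \<Sum>t\<in>cell q n a l. resid t * (real (q - 1) * real a * K))"
  proof (intro sum_mono)
    fix l t assume l: "l \<in> V" and t: "t \<in> cell q n a l"
    have "ncc_l1 q n U t (rep l) \<le> move_dist q t (rep l) * K"
      using lipschitz t rep_in_comps[OF l] cell_subset_comps by blast
    also have "\<dots> \<le> real (q - 1) * ((real 0 + 1) * real a) * K"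
      using move_dist_cells_le[OF _ a1 t rep_in_cell[rule_format, OF l], of 0] q2 K_nonneg
      by (intro mult_right_mono) auto
    finally show "(\<Sum>w\<in>?W. \<bar>resid t * (ncc q n U w t - ncc q n U w (rep l))\<bar>) \<le> resid t * (real (q - 1) * real a * K)"
      unfolding ncc_l1_scaled[OF resid_nonneg] using resid_nonneg by (simp add: mult_left_mono)
  qed
  also have "\<dots> = (\<Sum>t\<in>?W. resid t) * (real (q - 1) * real a * K)"
    by (simp add: sum_over_cells[OF a1] sum_distrib_right)
  also have "\<dots> \<le> 1 * (real (q - 1) * real a * K)"
  proof (rule mult_right_mono)
    have "(\<Sum>t\<in>?W. resid t) \<le> (\<Sum>t\<in>?W. Qip t)" by (intro sum_mono resid_le)
    then show "(\<Sum>t\<in>?W. resid t) \<le> 1" using dist by (simp add: is_dist_def)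
  qed (use K_nonneg in simp)
  finally show ?thesis by simp
qed

lemma stageII_out_l1_le:
  "(\<Sum>w\<in>comps q n. \<bar>\<Sum>t\<in>comps q n. (Qa t - Qhat t) * ncc q n U w t\<bar>)
    \<le> real N * (2 * real (q - 1) * real a * K) / real M"
proof -
  let ?W = "comps q n"
  have "(\<Sum>w\<in>?W. \<bar>\<Sum>t\<in>?W. (Qa t - Qhat t) * ncc q n U w t\<bar>)
      \<le> (\<Sum>i\<in>{1..<N}. \<Sum>w\<in>?W. \<bar>carry i * (ncc q n U w (rep (g i)) - ncc q n U w (rep (g (Suc i))))\<bar>)"
    unfolding stageII_sum_identity by (rule sum_abs_sum_le_swap) simp
  also have "\<dots> \<le> (\<Sum>i\<in>{1..<N}. 2 * real (q - 1) * real a * K / real M)"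
  proof (intro sum_mono)
    fix i assume i: "i \<in> {1..<N}"
    have gi: "g i \<in> V" "g (Suc i) \<in> V" using g_in_V i by auto
    have "ncc_l1 q n U (rep (g i)) (rep (g (Suc i))) \<le> move_dist q (rep (g i)) (rep (g (Suc i))) * K"
      using lipschitz rep_in_comps gi by blast
    also have "\<dots> \<le> real (q - 1) * ((real 1 + 1) * real a) * K"
      using move_dist_cells_le[OF _ a1 rep_in_cell[rule_format, OF gi(1)] rep_in_cell[rule_format, OF gi(2)],
          of 1] adjacent_coord_dist_le[OF g_adjacent[OF i]] q2 K_nonneg
      by (intro mult_right_mono) auto
    finally have "ncc_l1 q n U (rep (g i)) (rep (g (Suc i))) \<le> 2 * real (q - 1) * real a * K" by simp
    then have "carry i * ncc_l1 q n U (rep (g i)) (rep (g (Suc i))) \<le> 1 / real M * (2 * real (q - 1) * real a * K)"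
      using carry_bounds[of i] K_nonneg ncc_l1_def
      by (intro mult_mono) (auto simp: ncc_l1_def intro: sum_nonneg)
    then show "(\<Sum>w\<in>?W. \<bar>carry i * (ncc q n U w (rep (g i)) - ncc q n U w (rep (g (Suc i))))\<bar>)
        \<le> 2 * real (q - 1) * real a * K / real M"
      unfolding ncc_l1_scaled[OF carry_bounds(1)] by simp
  qed
  also have "\<dots> \<le> real N * (2 * real (q - 1) * real a * K) / real M"
    using K_nonneg by (simp add: divide_right_mono mult_right_mono)
  finally show ?thesis .
qed

lemma dTV_quant_le:
  "dTV q n (out_dist q n U Qip) (out_dist q n U Qhat)
    \<le> real (q - 1) * real a * K / 2 + real N * (real (q - 1) * real a * K) / real M"
proof -
  let ?W = "comps q n"
  let ?D1 = "\<lambda>w. \<Sum>t\<in>?W. (Qip t - Qa t) * ncc q n U w t"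
  let ?D2 = "\<lambda>w. \<Sum>t\<in>?W. (Qa t - Qhat t) * ncc q n U w t"
  have "out_dist q n U Qip w - out_dist q n U Qhat w = ?D1 w + ?D2 w" for w
    unfolding out_dist_def by (simp add: sum_subtractf[symmetric] sum.distrib[symmetric] algebra_simps)
  then have "dTV q n (out_dist q n U Qip) (out_dist q n U Qhat) = 1/2 * (\<Sum>w\<in>?W. \<bar>?D1 w + ?D2 w\<bar>)"
    unfolding dTV_def by presburger
  also have "\<dots> \<le> 1/2 * (\<Sum>w\<in>?W. \<bar>?D1 w\<bar> + \<bar>?D2 w\<bar>)"
    by (intro mult_left_mono sum_mono abs_triangle_ineq) simp
  also have "\<dots> = 1/2 * ((\<Sum>w\<in>?W. \<bar>?D1 w\<bar>) + (\<Sum>w\<in>?W. \<bar>?D2 w\<bar>))"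
    by (simp only: sum.distrib)
  finally show ?thesis
    using stageI_out_l1_le stageII_out_l1_le by (simp add: field_simps)
qed

end

lemma dTV_quant_le_positive_channel:
  assumes "positive_channel q U \<delta>" "a \<le> n" "1 \<le> L"
  defines "C \<equiv> real (q - 1) * (4 / sqrt \<delta>)"
  shows "dTV q n (out_dist q n U Qip) (out_dist q n U Qhat)
    \<le> C * real a * L / sqrt (real n) + (2 * real n / real a) ^ (q - 1) * (C * L / sqrt (real n)) * (real a / real M)"
proof -
  interpret positive_channel q U \<delta> by (rule assms(1))
  let ?X = "C / sqrt (real n)"
  have X: "0 \<le> ?X" using delta_pos by (simp add: C_def)
  have "dTV q n (out_dist q n U Qip) (out_dist q n U Qhat)
      \<le> real (q - 1) * real a * (4 / sqrt (\<delta> * real n)) / 2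
        + real N * (real (q - 1) * real a * (4 / sqrt (\<delta> * real n))) / real M"
    by (rule dTV_quant_le) (use ncc_l1_le_move_dist delta_pos in auto)
  also have "\<dots> = real a * ?X / 2 + real N * ?X * (real a / real M)"
    using delta_pos by (simp add: C_def real_sqrt_mult field_simps)
  also have "\<dots> \<le> real a * ?X * L + (2 * real n / real a) ^ (q - 1) * (?X * L) * (real a / real M)"
  proof (intro add_mono mult_right_mono mult_mono)
    have "y / 2 \<le> y * l" if "0 \<le> y" "1 \<le> l" for y l :: real
      using mult_left_mono[OF that(2,1)] that(1) by simp
    moreover have "0 \<le> real a * ?X" using X by (intro mult_nonneg_nonneg) simp_all
    ultimately show "real a * ?X / 2 \<le> real a * ?X * L" using assms(3) by blast
    show "real N \<le> (2 * real n / real a) ^ (q - 1)"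
      using card_Vset_le a1 assms(2) by simp
    show "?X \<le> ?X * L"
      using mult_left_mono[OF assms(3) X] by simp
  qed (use X assms(3) in auto)
  finally show ?thesis by (simp add: mult_ac)
qed

end

theorem proposition2:
  fixes q :: nat and U :: "nat \<Rightarrow> nat \<Rightarrow> real"
  assumes "q \<ge> 2"
    and "\<forall>x\<in>{1..q}. \<forall>y\<in>{1..q}. U y x > 0"
    and "\<forall>x\<in>{1..q}. (\<Sum>y\<in>{1..q}. U y x) = 1"
  shows "\<exists>C::real. \<exists>N0::nat. \<forall>n\<ge>N0. \<forall>M::nat. \<forall>a::nat.
    \<forall>Qip rep g.
      M \<ge> 2 \<and> a \<in> {1..n} \<and> is_dist q n Qip \<and>
      (\<forall>l\<in>Vset q n a. rep l \<in> cell q n a l) \<and> gray_like q n a g \<longrightarrow>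
      M_type q n M (quant q n a M Qip rep g) \<and>
      dTV q n (out_dist q n U Qip) (out_dist q n U (quant q n a M Qip rep g))
        \<le> C * real a * (log 2 (real n)) powr ((real q - 2) / 2) / sqrt (real n)
          + (2 * real n / real a) ^ (q - 1) * (C * (log 2 (real n)) powr ((real q - 2) / 2) / sqrt (real n))
            * (real a / real M)"
proof -
  define \<delta> where "\<delta> = Min ((\<lambda>(x, y). U y x) ` ({1..q} \<times> {1..q}))"
  have channel: "positive_channel q U \<delta>"
    unfolding \<delta>_def using assms by (intro positive_channel_min_entry) auto
  show ?thesis
  proof (intro exI[of _ "real (q - 1) * (4 / sqrt \<delta>)"] exI[of _ 2] allI impI conjI)
    fix n M a :: nat and Qip rep g
    assume n: "2 \<le> n" and h: "M \<ge> 2 \<and> a \<in> {1..n} \<and> is_dist q n Qip \<and>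
      (\<forall>l\<in>Vset q n a. rep l \<in> cell q n a l) \<and> gray_like q n a g"
    interpret quantizer q n a M Qip rep g
      using h assms(1) by unfold_locales auto
    show "M_type q n M (quant q n a M Qip rep g)" by (rule M_type_quant)
    have "1 \<le> log 2 (real n) powr ((real q - 2) / 2)"
      using n assms(1) by (intro ge_one_powr_ge_zero) auto
    then show "dTV q n (out_dist q n U Qip) (out_dist q n U (quant q n a M Qip rep g))
        \<le> real (q - 1) * (4 / sqrt \<delta>) * real a * (log 2 (real n)) powr ((real q - 2) / 2) / sqrt (real n)
          + (2 * real n / real a) ^ (q - 1)
            * (real (q - 1) * (4 / sqrt \<delta>) * (log 2 (real n)) powr ((real q - 2) / 2) / sqrt (real n))
            * (real a / real M)"
      using h by (intro dTV_quant_le_positive_channel[OF channel]) auto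
  qed
qed

end
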